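(* Let $d\ge 1$ and let $G_A=(V_A,E_A)$, $G_B=(V_B,E_B)$ be graphs that are universally rigid in $\mathbb{R}^d$. Let $\mathbf{p}^A$, $\mathbf{p}^B$ be configurations in general position in $\mathbb{R}^d$ of $G_A$, $G_B$, with $V_C=V_A\cap V_B$ a proper subset of both $V_A$ and $V_B$, $|V_C|\ge d+1$, and $\mathbf{p}^A_i=\mathbf{p}^B_i$ for $i\in V_C$. If both $G_A(\mathbf{p}^A)$ and $G_B(\mathbf{p}^B)$ have positive semidefinite stress matrices of nullity $d+1$, then their edge-reduced framework attachment (the framework with graph $(V_A\cup V_B,(E_A\cup E_B)\setminus F)$, where $F$ is the set of edges of $E_B\setminus E_A$ with both endpoints in $V_C$, and configuration $\mathbf{p}$ with $\mathbf{p}_i=\mathbf{p}^A_i$ for $i\in V_A$, $\mathbf{p}_i=\mathbf{p}^B_i$ for $i\in V_B$) also has a positive semidefinite stress matrix of nullity $d+1$.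
   Context: A framework $G(\mathbf{p})$ in $\mathbb{R}^d$ is a finite graph $G=(V,E)$ with points $\mathbf{p}_i\in\mathbb{R}^d$; general position means any $d+1$ distinct vertices have affinely independent points. $G(\mathbf{p})$ is universally rigid if for every $d'\ge d$, every configuration $\mathbf{q}$ in $\mathbb{R}^{d'}$ with $\|\mathbf{q}_i-\mathbf{q}_j\|=\|\mathbf{p}_i-\mathbf{p}_j\|$ for all edges satisfies the same equality for all pairs of vertices. A graph is universally rigid in $\mathbb{R}^d$ if every framework of it in general position in $\mathbb{R}^d$ is universally rigid. A stress matrix of $G(\mathbf{p})$ is a real $|V|\times|V|$ matrix $\Omega$ with: $\Omega_{ij}=\Omega_{ji}$; $\Omega_{ij}=0$ whenever $i\ne j$, $\{i,j\}\notin E$; $\sum_j\Omega_{ij}=0$ and $\sum_j\Omega_{ij}\mathbf{p}_j=0$ for all $i$. Nullity means $\dim\ker$. *)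

theory Defs
  imports Complex_Main
begin

text \<open>A point of R^d is a function
nat => real of which only the coordinates 0..d-1 are used; a configuration is
p :: 'v => nat => real.\<close>

definition graph :: "'v set \<Rightarrow> 'v set set \<Rightarrow> bool" where
  "graph V E \<longleftrightarrow> finite V \<and> (\<forall>e\<in>E. e \<subseteq> V \<and> card e = 2)"

definition sqdist :: "nat \<Rightarrow> ('v \<Rightarrow> nat \<Rightarrow> real) \<Rightarrow> 'v \<Rightarrow> 'v \<Rightarrow> real" where
  "sqdist d p i j = (\<Sum>k<d. (p i k - p j k)^2)"

definition aff_indep :: "nat \<Rightarrow> ('v \<Rightarrow> nat \<Rightarrow> real) \<Rightarrow> 'v set \<Rightarrow> bool" where
  "aff_indep d p S \<longleftrightarrow>
     (\<forall>c :: 'v \<Rightarrow> real. (\<Sum>i\<in>S. c i) = 0 \<and> (\<forall>k<d. (\<Sum>i\<in>S. c i * p i k) = 0)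
        \<longrightarrow> (\<forall>i\<in>S. c i = 0))"

definition general_position :: "nat \<Rightarrow> 'v set \<Rightarrow> ('v \<Rightarrow> nat \<Rightarrow> real) \<Rightarrow> bool" where
  "general_position d V p \<longleftrightarrow>
     (\<forall>S. S \<subseteq> V \<and> card S = d + 1 \<longrightarrow> aff_indep d p S)"

definition univ_rigid_framework ::
  "nat \<Rightarrow> 'v set \<Rightarrow> 'v set set \<Rightarrow> ('v \<Rightarrow> nat \<Rightarrow> real) \<Rightarrow> bool" where
  "univ_rigid_framework d V E p \<longleftrightarrow>
     (\<forall>d' \<ge> d. \<forall>q :: 'v \<Rightarrow> nat \<Rightarrow> real.
        (\<forall>i\<in>V. \<forall>j\<in>V. {i, j} \<in> E \<longrightarrow> sqdist d' q i j = sqdist d p i j)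
        \<longrightarrow> (\<forall>i\<in>V. \<forall>j\<in>V. sqdist d' q i j = sqdist d p i j))"

definition univ_rigid_graph :: "nat \<Rightarrow> 'v set \<Rightarrow> 'v set set \<Rightarrow> bool" where
  "univ_rigid_graph d V E \<longleftrightarrow>
     (\<forall>p. general_position d V p \<longrightarrow> univ_rigid_framework d V E p)"

text \<open>A |V| x |V| matrix is represented as a function 'v => 'v => real, only
its entries on V x V being relevant.\<close>
definition stress_matrix ::
  "nat \<Rightarrow> 'v set \<Rightarrow> 'v set set \<Rightarrow> ('v \<Rightarrow> nat \<Rightarrow> real) \<Rightarrow> ('v \<Rightarrow> 'v \<Rightarrow> real) \<Rightarrow> bool" where
  "stress_matrix d V E p \<Omega> \<longleftrightarrow>
     (\<forall>i\<in>V. \<forall>j\<in>V. \<Omega> i j = \<Omega> j i) \<and>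
     (\<forall>i\<in>V. \<forall>j\<in>V. i \<noteq> j \<and> {i, j} \<notin> E \<longrightarrow> \<Omega> i j = 0) \<and>
     (\<forall>i\<in>V. (\<Sum>j\<in>V. \<Omega> i j) = 0) \<and>
     (\<forall>i\<in>V. \<forall>k<d. (\<Sum>j\<in>V. \<Omega> i j * p j k) = 0)"

definition psd :: "'v set \<Rightarrow> ('v \<Rightarrow> 'v \<Rightarrow> real) \<Rightarrow> bool" where
  "psd V \<Omega> \<longleftrightarrow> (\<forall>x :: 'v \<Rightarrow> real. (\<Sum>i\<in>V. \<Sum>j\<in>V. x i * \<Omega> i j * x j) \<ge> 0)"

definition matrix_kernel :: "'v set \<Rightarrow> ('v \<Rightarrow> 'v \<Rightarrow> real) \<Rightarrow> ('v \<Rightarrow> real) set" where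
  "matrix_kernel V \<Omega> =
     {x. (\<forall>i. i \<notin> V \<longrightarrow> x i = 0) \<and> (\<forall>i\<in>V. (\<Sum>j\<in>V. \<Omega> i j * x j) = 0)}"

definition lin_indep_fun :: "('v \<Rightarrow> real) set \<Rightarrow> bool" where
  "lin_indep_fun B \<longleftrightarrow>
     (\<forall>c :: ('v \<Rightarrow> real) \<Rightarrow> real. (\<forall>i. (\<Sum>b\<in>B. c b * b i) = 0) \<longrightarrow> (\<forall>b\<in>B. c b = 0))"

definition has_nullity :: "'v set \<Rightarrow> ('v \<Rightarrow> 'v \<Rightarrow> real) \<Rightarrow> nat \<Rightarrow> bool" where
  "has_nullity V \<Omega> n \<longleftrightarrow>
     (\<exists>B. finite B \<and> card B = n \<and> B \<subseteq> matrix_kernel V \<Omega> \<and> lin_indep_fun B \<and>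
          (\<forall>x\<in>matrix_kernel V \<Omega>. \<exists>c. x = (\<lambda>i. \<Sum>b\<in>B. c b * b i)))"

definition has_psd_stress_nullity ::
  "nat \<Rightarrow> 'v set \<Rightarrow> 'v set set \<Rightarrow> ('v \<Rightarrow> nat \<Rightarrow> real) \<Rightarrow> nat \<Rightarrow> bool" where
  "has_psd_stress_nullity d V E p n \<longleftrightarrow>
     (\<exists>\<Omega>. stress_matrix d V E p \<Omega> \<and> psd V \<Omega> \<and> has_nullity V \<Omega> n)"

end

theory Submission
  imports Defs "HOL-Library.Function_Algebras"
begin

text \<open>
Universal rigidity of \<open>G\<^sub>A\<close> in general position forces every infinitesimal flex of
\<open>G\<^sub>A(p\<^sup>A)\<close> to preserve the lengths of all pairs, not only of the edges. Dually, any
prescribed values on the removed edges \<open>F\<close> can be realised by a stress \<open>S\<close> of \<open>G\<^sub>A(p\<^sup>A)\<close>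
with \<open>F\<close> added; we take \<open>S = -\<Omega>\<^sub>B\<close> on \<open>F\<close>. As a stress, \<open>S\<close> annihilates the affine
functions, which form the kernel of \<open>\<Omega>\<^sub>A\<close>, so \<open>S\<close> is dominated by a multiple of \<open>\<Omega>\<^sub>A\<close> and
\<open>c \<Omega>\<^sub>A + S \<succeq> \<Omega>\<^sub>A\<close> for large \<open>c\<close>. The sum \<open>\<Omega>\<close> of \<open>c \<Omega>\<^sub>A + S\<close> and \<open>\<Omega>\<^sub>B\<close> (both extended
by zero) is then a positive semidefinite stress of the attachment in which the entries on
\<open>F\<close> cancel. A vector in its kernel lies in the kernels of \<open>\<Omega>\<^sub>A\<close> and \<open>\<Omega>\<^sub>B\<close>, hence is affine
on \<open>V\<^sub>A\<close> and on \<open>V\<^sub>B\<close>; the two affine functions agree on \<open>d + 1\<close> affinely independent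
shared points, so the kernel of \<open>\<Omega>\<close> consists of the affine functions, of dimension \<open>d + 1\<close>.
\<close>

section \<open>Inner products and quadratic forms on finite index sets\<close>

definition dotp :: "'a set \<Rightarrow> ('a \<Rightarrow> real) \<Rightarrow> ('a \<Rightarrow> real) \<Rightarrow> real" where
  "dotp N x y = (\<Sum>n\<in>N. x n * y n)"

lemma dotp_commute: "dotp N x y = dotp N y x"
  unfolding dotp_def by (simp add: mult.commute)

lemma dotp_cong:
  "(\<And>n. n \<in> N \<Longrightarrow> x n = x' n) \<Longrightarrow> (\<And>n. n \<in> N \<Longrightarrow> y n = y' n) \<Longrightarrow> dotp N x y = dotp N x' y'"
  unfolding dotp_def by (rule sum.cong) auto

lemma dotp_diff_left: "dotp N (\<lambda>n. a n - b n) c = dotp N a c - dotp N b c"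
  unfolding dotp_def by (simp add: algebra_simps sum_subtractf)

lemma dotp_add_left: "dotp N (\<lambda>n. a n + b n) c = dotp N a c + dotp N b c"
  unfolding dotp_def by (simp add: algebra_simps sum.distrib)

lemma dotp_scale_left: "dotp N (\<lambda>n. t * a n) c = t * dotp N a c"
  unfolding dotp_def by (simp add: algebra_simps sum_distrib_left)

lemma dotp_sum_right: "dotp N x (\<lambda>n. \<Sum>e\<in>E. c e * r e n) = (\<Sum>e\<in>E. c e * dotp N x (r e))"
  unfolding dotp_def by (simp add: sum_distrib_left sum_distrib_right mult_ac sum.swap[of _ N E])

lemma dotp_sum_left: "dotp N (\<lambda>n. \<Sum>e\<in>E. c e * r e n) x = (\<Sum>e\<in>E. c e * dotp N (r e) x)"
  using dotp_sum_right[of N x c r E] by (simp add: dotp_commute)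

lemma dotp_self_eq_0: "finite N \<Longrightarrow> dotp N x x = 0 \<Longrightarrow> n \<in> N \<Longrightarrow> x n = 0"
  unfolding dotp_def by (subst (asm) sum_nonneg_eq_0_iff) auto

definition unit_vec :: "'a \<Rightarrow> 'a \<Rightarrow> real" where
  "unit_vec i = (\<lambda>j. if j = i then 1 else 0)"

lemma dotp_unit_vec: "finite N \<Longrightarrow> i \<in> N \<Longrightarrow> dotp N (unit_vec i) x = x i"
  unfolding dotp_def unit_vec_def by (simp add: if_distrib[of "\<lambda>c. c * _"] cong: if_cong)

text \<open>Gram--Schmidt in one step: project \<open>r e\<^sub>0\<close> off the span of the others and correct
  \<open>w\<close> along the residual \<open>y\<close>, unless \<open>y\<close> vanishes on \<open>N\<close>.\<close>
lemma exists_orthogonal_residual: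
  assumes "finite N" "finite E"
  shows "\<exists>lm. \<forall>e\<in>E. dotp N (\<lambda>n. w n - (\<Sum>e'\<in>E. lm e' * r e' n)) (r e) = 0"
  using assms(2)
proof (induction E arbitrary: w rule: finite_induct)
  case empty
  then show ?case by simp
next
  case (insert e0 E)
  obtain lm where "\<forall>e\<in>E. dotp N (\<lambda>n. w n - (\<Sum>e'\<in>E. lm e' * r e' n)) (r e) = 0"
    using insert.IH by blast
  moreover obtain mu where "\<forall>e\<in>E. dotp N (\<lambda>n. r e0 n - (\<Sum>e'\<in>E. mu e' * r e' n)) (r e) = 0"
    using insert.IH by blast
  moreover define z where "z = (\<lambda>n. w n - (\<Sum>e'\<in>E. lm e' * r e' n))"
  moreover define y where "y = (\<lambda>n. r e0 n - (\<Sum>e'\<in>E. mu e' * r e' n))"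
  ultimately have zE: "\<forall>e\<in>E. dotp N z (r e) = 0" and yE: "\<forall>e\<in>E. dotp N y (r e) = 0"
    by simp_all
  have dotp_r_e0: "dotp N u (r e0) = dotp N u y + (\<Sum>e\<in>E. mu e * dotp N u (r e))" for u
  proof -
    have "r e0 = (\<lambda>n. y n + (\<Sum>e'\<in>E. mu e' * r e' n))"
      unfolding y_def by simp
    then show ?thesis
      using dotp_add_left[of N y _ u] by (simp add: dotp_commute[of N u] dotp_sum_left)
  qed
  show ?case
  proof (cases "dotp N y y = 0")
    case True
    have "dotp N z y = 0"
      unfolding dotp_def using dotp_self_eq_0[OF assms(1) True] by simp
    then have "\<forall>e\<in>insert e0 E. dotp N z (r e) = 0"
      using dotp_r_e0[of z] zE by simp
    moreover have "(\<Sum>e'\<in>insert e0 E. (lm(e0 := 0)) e' * r e' n) = (\<Sum>e'\<in>E. lm e' * r e' n)" for n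
      using insert.hyps by (auto intro!: sum.cong)
    ultimately show ?thesis unfolding z_def by (intro exI[of _ "lm(e0 := 0)"]) simp
  next
    case False
    define t where "t = dotp N z y / dotp N y y"
    define lm' where "lm' = (\<lambda>e. lm e - t * mu e)(e0 := t)"
    have residual: "w n - (\<Sum>e'\<in>insert e0 E. lm' e' * r e' n) = z n - t * y n" for n
    proof -
      have "(\<Sum>e'\<in>insert e0 E. lm' e' * r e' n)
          = t * r e0 n + (\<Sum>e'\<in>E. (lm e' - t * mu e') * r e' n)"
        using insert.hyps by (auto simp add: lm'_def intro!: sum.cong)
      then show ?thesis
        unfolding z_def y_def by (simp add: algebra_simps sum_subtractf sum_distrib_left)
    qed
    have "dotp N (\<lambda>n. z n - t * y n) (r e) = 0" if "e \<in> E" for e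
      using zE yE that by (simp add: dotp_diff_left dotp_scale_left)
    moreover have "dotp N (\<lambda>n. z n - t * y n) y = 0"
      by (simp only: dotp_diff_left dotp_scale_left) (simp add: t_def False)
    ultimately have "dotp N (\<lambda>n. z n - t * y n) (r e) = 0" if "e \<in> insert e0 E" for e
      using that dotp_r_e0[of "\<lambda>n. z n - t * y n"] by auto
    then show ?thesis by (intro exI[of _ lm']) (simp add: residual)
  qed
qed

lemma in_span_if_annihilates_annihilator:
  assumes "finite N" "finite E"
    and annihilates: "\<And>x. (\<forall>e\<in>E. dotp N (r e) x = 0) \<Longrightarrow> dotp N w x = 0"
  shows "\<exists>lm. \<forall>n\<in>N. w n = (\<Sum>e\<in>E. lm e * r e n)"
proof -
  obtain lm where lm: "\<forall>e\<in>E. dotp N (\<lambda>n. w n - (\<Sum>e'\<in>E. lm e' * r e' n)) (r e) = 0"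
    using exists_orthogonal_residual[OF assms(1,2)] by blast
  define z where "z = (\<lambda>n. w n - (\<Sum>e'\<in>E. lm e' * r e' n))"
  have z_orth: "\<forall>e\<in>E. dotp N (r e) z = 0"
    using lm by (simp add: z_def dotp_commute)
  then have "dotp N (\<lambda>n. \<Sum>e'\<in>E. lm e' * r e' n) z = 0"
    by (simp add: dotp_sum_left)
  with annihilates[OF z_orth] have "dotp N z z = 0"
    by (subst (1) z_def) (simp add: dotp_diff_left)
  then have "\<forall>n\<in>N. z n = 0"
    using dotp_self_eq_0[OF assms(1)] by blast
  then show ?thesis unfolding z_def by auto
qed

definition bilin :: "'a set \<Rightarrow> ('a \<Rightarrow> 'a \<Rightarrow> real) \<Rightarrow> ('a \<Rightarrow> real) \<Rightarrow> ('a \<Rightarrow> real) \<Rightarrow> real" where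
  "bilin V A x y = (\<Sum>i\<in>V. \<Sum>j\<in>V. x i * A i j * y j)"

definition symmetric_on :: "'a set \<Rightarrow> ('a \<Rightarrow> 'a \<Rightarrow> real) \<Rightarrow> bool" where
  "symmetric_on V A \<longleftrightarrow> (\<forall>i\<in>V. \<forall>j\<in>V. A i j = A j i)"

definition in_kernel :: "'a set \<Rightarrow> ('a \<Rightarrow> 'a \<Rightarrow> real) \<Rightarrow> ('a \<Rightarrow> real) \<Rightarrow> bool" where
  "in_kernel V A x \<longleftrightarrow> (\<forall>i\<in>V. (\<Sum>j\<in>V. A i j * x j) = 0)"

lemma psd_iff_bilin: "psd V A \<longleftrightarrow> (\<forall>x. bilin V A x x \<ge> 0)"
  unfolding psd_def bilin_def by simp

lemma bilin_eq_dotp: "bilin V A x y = dotp V x (\<lambda>i. \<Sum>j\<in>V. A i j * y j)"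
  unfolding bilin_def dotp_def by (simp add: sum_distrib_left mult_ac)

lemma bilin_commute: "symmetric_on V A \<Longrightarrow> bilin V A x y = bilin V A y x"
  unfolding bilin_def symmetric_on_def by (subst sum.swap) (auto intro!: sum.cong simp: mult_ac)

lemma bilin_add_left: "bilin V A (\<lambda>i. x i + y i) z = bilin V A x z + bilin V A y z"
  unfolding bilin_def by (simp add: algebra_simps sum.distrib)

lemma bilin_add_right: "bilin V A z (\<lambda>i. x i + y i) = bilin V A z x + bilin V A z y"
  unfolding bilin_def by (simp add: algebra_simps sum.distrib)

lemma bilin_scale_left: "bilin V A (\<lambda>i. t * x i) z = t * bilin V A x z"
  unfolding bilin_def by (simp add: algebra_simps sum_distrib_left)

lemma bilin_scale_right: "bilin V A z (\<lambda>i. t * x i) = t * bilin V A z x"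
  unfolding bilin_def by (simp add: algebra_simps sum_distrib_left)

lemma bilin_lin_comb_matrix:
  "bilin V (\<lambda>i j. a * A i j + B i j) x y = a * bilin V A x y + bilin V B x y"
  unfolding bilin_def by (simp add: algebra_simps sum.distrib sum_distrib_left)

lemma bilin_uminus_matrix: "bilin V (\<lambda>i j. - A i j) x y = - bilin V A x y"
  unfolding bilin_def by (simp add: sum_negf)

lemma bilin_in_kernel_right: "in_kernel V A k \<Longrightarrow> bilin V A x k = 0"
  unfolding bilin_eq_dotp in_kernel_def dotp_def by simp

lemma in_kernel_lin_comb:
  assumes "\<forall>b\<in>B. in_kernel V A b"
  shows "in_kernel V A (\<lambda>n. \<Sum>b\<in>B. c b * b n)"
  unfolding in_kernel_def
proof
  fix i assume "i \<in> V"
  have "(\<Sum>j\<in>V. A i j * (\<Sum>b\<in>B. c b * b j)) = (\<Sum>b\<in>B. c b * (\<Sum>j\<in>V. A i j * b j))"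
    by (simp add: sum_distrib_left mult_ac sum.swap[of _ V B])
  with assms \<open>i \<in> V\<close> show "(\<Sum>j\<in>V. A i j * (\<Sum>b\<in>B. c b * b j)) = 0"
    unfolding in_kernel_def by simp
qed

lemma quadratic_nonneg_discriminant:
  fixes a b c :: real
  assumes "\<And>t. a + 2*b*t + c*t^2 \<ge> 0" "c \<ge> 0"
  shows "b^2 \<le> a * c"
proof (cases "c = 0")
  case True
  have "b = 0"
  proof (rule ccontr)
    assume "b \<noteq> 0"
    have "a + 2*b*(-(a+1)/(2*b)) + c*(-(a+1)/(2*b))^2 \<ge> 0" by (rule assms(1))
    with \<open>b \<noteq> 0\<close> True show False by (simp add: field_simps)
  qed
  then show ?thesis using True by simp
next
  case False
  with assms(2) have "c > 0" by simp
  have "a + 2*b*(-b/c) + c*(-b/c)^2 \<ge> 0" by (rule assms(1))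
  with \<open>c > 0\<close> show ?thesis by (simp add: field_simps power2_eq_square)
qed

lemma psd_cauchy_schwarz:
  assumes "psd V A" "symmetric_on V A"
  shows "(bilin V A x y)^2 \<le> bilin V A x x * bilin V A y y"
proof (rule quadratic_nonneg_discriminant)
  fix t
  have "0 \<le> bilin V A (\<lambda>i. x i + t * y i) (\<lambda>i. x i + t * y i)"
    using assms(1) by (simp add: psd_iff_bilin)
  also have "\<dots> = bilin V A x x + 2 * bilin V A x y * t + bilin V A y y * t^2"
    using bilin_commute[OF assms(2), of y x]
    by (simp add: bilin_add_left bilin_add_right bilin_scale_left bilin_scale_right
        algebra_simps power2_eq_square)
  finally show "0 \<le> bilin V A x x + 2 * bilin V A x y * t + bilin V A y y * t^2" .
qed (use assms(1) in \<open>simp add: psd_iff_bilin\<close>)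

lemma psd_bilin_self_eq_0_imp_in_kernel:
  assumes "finite V" "psd V A" "symmetric_on V A" "bilin V A x x = 0"
  shows "in_kernel V A x"
  unfolding in_kernel_def
proof
  fix i assume "i \<in> V"
  have "(bilin V A (unit_vec i) x)^2 \<le> bilin V A (unit_vec i) (unit_vec i) * bilin V A x x"
    by (rule psd_cauchy_schwarz[OF assms(2,3)])
  with assms(4) have "bilin V A (unit_vec i) x = 0" by simp
  with \<open>i \<in> V\<close> show "(\<Sum>j\<in>V. A i j * x j) = 0"
    using assms(1) by (simp add: bilin_eq_dotp dotp_unit_vec)
qed

text \<open>A functional vanishing on the kernel is a row combination \<open>\<lambda>\<^sup>T A\<close>, so by
  Cauchy--Schwarz its square is bounded by \<open>\<lambda>\<^sup>T A \<lambda>\<close> times the form.\<close>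
lemma dotp_square_le_bilin:
  assumes "finite V" "psd V A" "symmetric_on V A"
    and annihilates: "\<And>x. in_kernel V A x \<Longrightarrow> dotp V r x = 0"
  shows "\<exists>C. \<forall>x. (dotp V r x)^2 \<le> C * bilin V A x x"
proof -
  have "\<exists>lm. \<forall>n\<in>V. r n = (\<Sum>e\<in>V. lm e * A e n)"
  proof (rule in_span_if_annihilates_annihilator[OF assms(1) assms(1)])
    fix x assume "\<forall>e\<in>V. dotp V (A e) x = 0"
    then have "in_kernel V A x" unfolding in_kernel_def dotp_def by simp
    then show "dotp V r x = 0" by (rule annihilates)
  qed
  then obtain lm where lm: "\<forall>n\<in>V. r n = (\<Sum>e\<in>V. lm e * A e n)" by blast
  have "dotp V r x = bilin V A lm x" for x
  proof -
    have "dotp V r x = dotp V (\<lambda>n. \<Sum>e\<in>V. lm e * A e n) x"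
      using lm by (intro dotp_cong) auto
    also have "\<dots> = bilin V A lm x"
      unfolding dotp_def bilin_def
      by (subst sum.swap) (simp add: sum_distrib_right sum_distrib_left mult_ac)
    finally show ?thesis .
  qed
  then show ?thesis
    using psd_cauchy_schwarz[OF assms(2,3), of lm] by (intro exI[of _ "bilin V A lm lm"]) simp
qed

lemma bilin_kernel_shift:
  assumes "symmetric_on V A" "in_kernel V A k"
  shows "bilin V A (\<lambda>n. u n + k n) (\<lambda>n. u n + k n) = bilin V A u u"
  using bilin_in_kernel_right[OF assms(2)] bilin_commute[OF assms(1), of k]
  by (simp add: bilin_add_left bilin_add_right)

lemma bilin_le_abs_sum:
  assumes "finite V"
  shows "bilin V A y y \<le> (\<Sum>i\<in>V. \<Sum>j\<in>V. \<bar>A i j\<bar>) * (\<Sum>i\<in>V. (y i)^2)"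
proof -
  define Y where "Y = (\<Sum>i\<in>V. (y i)^2)"
  have square_le: "(y i)^2 \<le> Y" if "i \<in> V" for i
    unfolding Y_def using assms that by (intro member_le_sum) auto
  have "\<bar>y i\<bar> * \<bar>y j\<bar> \<le> Y" if "i \<in> V" "j \<in> V" for i j
  proof -
    have "2 * \<bar>y i\<bar> * \<bar>y j\<bar> \<le> (y i)^2 + (y j)^2"
      using sum_squares_bound[of "\<bar>y i\<bar>" "\<bar>y j\<bar>"] by (simp add: power2_abs)
    with square_le[OF that(1)] square_le[OF that(2)] show ?thesis by linarith
  qed
  then have "y i * A i j * y j \<le> \<bar>A i j\<bar> * Y" if "i \<in> V" "j \<in> V" for i j
    using that mult_left_mono[of "\<bar>y i\<bar> * \<bar>y j\<bar>" Y "\<bar>A i j\<bar>"]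
      abs_ge_self[of "y i * A i j * y j"] by (simp add: abs_mult mult_ac)
  then have "bilin V A y y \<le> (\<Sum>i\<in>V. \<Sum>j\<in>V. \<bar>A i j\<bar> * Y)"
    unfolding bilin_def by (intro sum_mono) simp
  then show ?thesis
    unfolding Y_def by (simp add: sum_distrib_right)
qed

lemma sum_squares_le_bilin:
  assumes fin: "finite V" and psd: "psd V A" and sym: "symmetric_on V A" and "finite B"
    and spans: "\<And>x. in_kernel V A x \<Longrightarrow> \<exists>c. \<forall>i\<in>V. x i = (\<Sum>b\<in>B. c b * b i)"
  shows "\<exists>C. \<forall>x. (\<forall>b\<in>B. dotp V x b = 0) \<longrightarrow> (\<Sum>i\<in>V. (x i)^2) \<le> C * bilin V A x x"
proof -
  have "\<forall>i. \<exists>nu. \<forall>b\<in>B. dotp V (\<lambda>n. unit_vec i n - (\<Sum>b'\<in>B. nu b' * b' n)) b = 0"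
    using exists_orthogonal_residual[OF fin \<open>finite B\<close>, of _ "\<lambda>b. b"] by blast
  then obtain nu where nu: "\<forall>i. \<forall>b\<in>B. dotp V (\<lambda>n. unit_vec i n - (\<Sum>b'\<in>B. nu i b' * b' n)) b = 0"
    by (rule choice[THEN exE])
  define coord where "coord = (\<lambda>i n. unit_vec i n - (\<Sum>b\<in>B. nu i b * b n))"
  have coord_orth: "dotp V (coord i) b = 0" if "b \<in> B" for i b
    using nu that unfolding coord_def by blast
  have "\<exists>C. \<forall>x. (dotp V (coord i) x)^2 \<le> C * bilin V A x x" for i
  proof (rule dotp_square_le_bilin[OF fin psd sym])
    fix x assume "in_kernel V A x"
    then obtain c where "\<forall>j\<in>V. x j = (\<Sum>b\<in>B. c b * b j)" using spans by blast
    then have "dotp V (coord i) x = dotp V (coord i) (\<lambda>j. \<Sum>b\<in>B. c b * b j)"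
      by (intro dotp_cong) auto
    then show "dotp V (coord i) x = 0" by (simp add: dotp_sum_right coord_orth)
  qed
  then have "\<forall>i. \<exists>C. \<forall>x. (dotp V (coord i) x)^2 \<le> C * bilin V A x x" by blast
  then obtain C where C: "\<forall>i x. (dotp V (coord i) x)^2 \<le> C i * bilin V A x x"
    by (rule choice[THEN exE])
  have "(\<Sum>i\<in>V. (x i)^2) \<le> (\<Sum>i\<in>V. C i) * bilin V A x x" if "\<forall>b\<in>B. dotp V x b = 0" for x
  proof -
    have coord_x: "dotp V (coord i) x = x i" if "i \<in> V" for i
    proof -
      have "dotp V (coord i) x = dotp V (unit_vec i) x - (\<Sum>b\<in>B. nu i b * dotp V b x)"
        by (simp add: coord_def dotp_diff_left dotp_sum_left)
      moreover have "\<forall>b\<in>B. dotp V b x = 0"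
        using \<open>\<forall>b\<in>B. dotp V x b = 0\<close> by (simp add: dotp_commute)
      ultimately show ?thesis by (simp add: dotp_unit_vec[OF fin that])
    qed
    have "(x i)^2 \<le> C i * bilin V A x x" if "i \<in> V" for i
      using C coord_x[OF that] by metis
    then have "(\<Sum>i\<in>V. (x i)^2) \<le> (\<Sum>i\<in>V. C i * bilin V A x x)"
      by (rule sum_mono)
    then show ?thesis by (simp add: sum_distrib_right)
  qed
  then show ?thesis by blast
qed

lemma bilin_dominated_by_psd:
  assumes fin: "finite V" and psd: "psd V A" and sym_A: "symmetric_on V A"
    and sym_S: "symmetric_on V S" and "finite B"
    and B_kernel: "\<forall>b\<in>B. in_kernel V A b"
    and spans: "\<And>x. in_kernel V A x \<Longrightarrow> \<exists>c. \<forall>i\<in>V. x i = (\<Sum>b\<in>B. c b * b i)"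
    and kernel_sub: "\<And>x. in_kernel V A x \<Longrightarrow> in_kernel V S x"
  shows "\<exists>C. \<forall>x. bilin V S x x \<le> C * bilin V A x x"
proof -
  obtain C where C: "\<And>x. \<forall>b\<in>B. dotp V x b = 0 \<Longrightarrow> (\<Sum>i\<in>V. (x i)^2) \<le> C * bilin V A x x"
    using sum_squares_le_bilin[OF fin psd sym_A \<open>finite B\<close> spans] by blast
  define norm_S where "norm_S = (\<Sum>i\<in>V. \<Sum>j\<in>V. \<bar>S i j\<bar>)"
  have "bilin V S x x \<le> norm_S * C * bilin V A x x" for x
  proof -
    obtain lm where lm: "\<forall>b\<in>B. dotp V (\<lambda>n. x n - (\<Sum>b'\<in>B. lm b' * b' n)) b = 0"
      using exists_orthogonal_residual[OF fin \<open>finite B\<close>, of x "\<lambda>b. b"] by blast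
    define k where "k = (\<lambda>n. \<Sum>b\<in>B. lm b * b n)"
    define x' where "x' = (\<lambda>n. x n - k n)"
    have x_split: "x = (\<lambda>n. x' n + k n)" unfolding x'_def by simp
    have "in_kernel V A k" unfolding k_def by (rule in_kernel_lin_comb[OF B_kernel])
    then have A_eq: "bilin V A x x = bilin V A x' x'" and S_eq: "bilin V S x x = bilin V S x' x'"
      unfolding x_split by (simp_all add: bilin_kernel_shift sym_A sym_S kernel_sub)
    have "bilin V S x' x' \<le> norm_S * (\<Sum>i\<in>V. (x' i)^2)"
      unfolding norm_S_def by (rule bilin_le_abs_sum[OF fin])
    also have "\<dots> \<le> norm_S * (C * bilin V A x' x')"
    proof (rule mult_left_mono)
      show "(\<Sum>i\<in>V. (x' i)^2) \<le> C * bilin V A x' x'"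
        using C[of x'] lm unfolding x'_def k_def by blast
      show "0 \<le> norm_S" unfolding norm_S_def by (intro sum_nonneg) simp
    qed
    finally show ?thesis unfolding A_eq S_eq by (simp add: mult.assoc)
  qed
  then show ?thesis by blast
qed

section \<open>Linear independence of real-valued functions\<close>

global_interpretation fspace: vector_space "\<lambda>(c::real) (f::'a \<Rightarrow> real). (\<lambda>x. c * f x)"
  by unfold_locales (auto simp: fun_eq_iff algebra_simps)

lemma sum_fun_apply: "(\<Sum>v\<in>A. (f v :: 'a \<Rightarrow> real)) x = (\<Sum>v\<in>A. f v x)"
  by (induction A rule: infinite_finite_induct) auto

lemma fspace_span_finite_iff:
  assumes "finite B"
  shows "x \<in> fspace.span B \<longleftrightarrow> (\<exists>c. x = (\<lambda>i. \<Sum>b\<in>B. c b * b i))"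
  using fspace.span_finite[OF assms] by (auto simp: fun_eq_iff sum_fun_apply)

lemma fspace_independent_iff:
  assumes "finite B"
  shows "fspace.independent B \<longleftrightarrow> lin_indep_fun B"
  using fspace.dependent_finite[OF assms] by (auto simp: lin_indep_fun_def fun_eq_iff sum_fun_apply)

lemma fspace_lin_comb_in_span:
  assumes "\<forall>k\<in>R. g k \<in> fspace.span T"
  shows "(\<lambda>i. \<Sum>k\<in>R. c k * g k i) \<in> fspace.span T"
proof -
  have "(\<lambda>i. \<Sum>k\<in>R. c k * g k i) = (\<Sum>k\<in>R. (\<lambda>i. c k * g k i))"
    by (simp add: fun_eq_iff sum_fun_apply)
  then show ?thesis
    using fspace.span_sum[of R "\<lambda>k i. c k * g k i" T] assms fspace.span_scale by auto
qed

definition lin_indep_on :: "'k set \<Rightarrow> ('k \<Rightarrow> 'a \<Rightarrow> real) \<Rightarrow> bool" where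
  "lin_indep_on T g \<longleftrightarrow> (\<forall>c. (\<forall>i. (\<Sum>k\<in>T. c k * g k i) = 0) \<longrightarrow> (\<forall>k\<in>T. c k = 0))"

lemma lin_indep_on_inj_on:
  assumes "finite T" "lin_indep_on T g"
  shows "inj_on g T"
proof (rule inj_onI, rule ccontr)
  fix k l assume "k \<in> T" "l \<in> T" "g k = g l" "k \<noteq> l"
  define c where "c = (\<lambda>j. if j = k then (1::real) else if j = l then -1 else 0)"
  have "(\<Sum>j\<in>T. c j * g j i) = (\<Sum>j\<in>{k,l}. c j * g j i)" for i
    by (rule sum.mono_neutral_right) (use \<open>k \<in> T\<close> \<open>l \<in> T\<close> assms(1) in \<open>auto simp: c_def\<close>)
  then have "\<forall>i. (\<Sum>j\<in>T. c j * g j i) = 0"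
    using \<open>g k = g l\<close> \<open>k \<noteq> l\<close> by (simp add: c_def)
  then have "c k = 0" using assms(2) \<open>k \<in> T\<close> unfolding lin_indep_on_def by blast
  then show False by (simp add: c_def)
qed

lemma lin_indep_on_imp_lin_indep_fun:
  assumes "finite T" "lin_indep_on T g"
  shows "lin_indep_fun (g ` T)"
  unfolding lin_indep_fun_def
proof (intro allI impI)
  fix c assume "\<forall>i. (\<Sum>b\<in>g ` T. c b * b i) = 0"
  then have "\<forall>i. (\<Sum>k\<in>T. c (g k) * g k i) = 0"
    by (simp add: sum.reindex[OF lin_indep_on_inj_on[OF assms]])
  moreover have "(\<forall>i. (\<Sum>k\<in>T. (c \<circ> g) k * g k i) = 0) \<longrightarrow> (\<forall>k\<in>T. (c \<circ> g) k = 0)"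
    using assms(2) unfolding lin_indep_on_def by blast
  ultimately have "\<forall>k\<in>T. c (g k) = 0" by simp
  then show "\<forall>b\<in>g ` T. c b = 0" by blast
qed

lemma lin_indep_on_independent:
  "finite T \<Longrightarrow> lin_indep_on T g \<Longrightarrow> fspace.independent (g ` T)"
  by (simp add: fspace_independent_iff lin_indep_on_imp_lin_indep_fun)

lemma card_le_if_lin_indep_in_span:
  assumes "finite T" "lin_indep_on T g" "finite B" "g ` T \<subseteq> fspace.span B"
  shows "card T \<le> card B"
  using fspace.independent_span_bound[OF assms(3) lin_indep_on_independent[OF assms(1,2)] assms(4)]
    card_image[OF lin_indep_on_inj_on[OF assms(1,2)]] by simp

lemma lin_indep_on_spans:
  assumes "finite B" "finite T" "card T = card B" "K \<subseteq> fspace.span B"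
    and "g ` T \<subseteq> K" "lin_indep_on T g" "x \<in> K"
  shows "\<exists>c. \<forall>i. x i = (\<Sum>k\<in>T. c k * g k i)"
proof -
  have inj: "inj_on g T" by (rule lin_indep_on_inj_on[OF assms(2,6)])
  have "x \<in> fspace.span (g ` T)"
  proof (rule ccontr)
    assume "x \<notin> fspace.span (g ` T)"
    then have "fspace.independent (insert x (g ` T))"
      using fspace.independent_insertI lin_indep_on_independent[OF assms(2,6)] by blast
    moreover have "insert x (g ` T) \<subseteq> fspace.span B" using assms(4,5,7) by blast
    ultimately have "card (insert x (g ` T)) \<le> card B"
      using fspace.independent_span_bound[OF assms(1)] by blast
    moreover have "x \<notin> g ` T" using \<open>x \<notin> fspace.span (g ` T)\<close> fspace.span_base by blast
    ultimately show False using assms(2,3) card_image[OF inj] by simp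
  qed
  then obtain c where "x = (\<lambda>i. \<Sum>b\<in>g ` T. c b * b i)"
    using fspace_span_finite_iff[of "g ` T"] assms(2) by blast
  then show ?thesis by (intro exI[of _ "c \<circ> g"]) (simp add: sum.reindex[OF inj])
qed

lemma lin_indep_on_unit_vec: "finite S \<Longrightarrow> lin_indep_on S unit_vec"
  unfolding lin_indep_on_def unit_vec_def by (auto simp: if_distrib[of "\<lambda>c. _ * c"] cong: if_cong)

lemma supported_in_span_unit_vec:
  assumes "finite S" "\<forall>j. j \<notin> S \<longrightarrow> f j = 0"
  shows "f \<in> fspace.span (unit_vec ` S)"
proof -
  have "f = (\<lambda>j. \<Sum>i\<in>S. f i * unit_vec i j)"
    using assms by (auto simp: fun_eq_iff unit_vec_def if_distrib[of "\<lambda>c. _ * c"] cong: if_cong)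
  also have "\<dots> \<in> fspace.span (unit_vec ` S)"
    by (rule fspace_lin_comb_in_span) (auto intro: fspace.span_base)
  finally show ?thesis .
qed

lemma square_matrix_rows_independent:
  fixes a :: "'k \<Rightarrow> 'a \<Rightarrow> real"
  assumes "finite S" "finite K" "card K = card S"
    and columns: "\<And>c. \<forall>k\<in>K. (\<Sum>i\<in>S. c i * a k i) = 0 \<Longrightarrow> \<forall>i\<in>S. c i = 0"
    and rows: "\<forall>i\<in>S. (\<Sum>k\<in>K. al k * a k i) = 0"
  shows "\<forall>k\<in>K. al k = 0"
proof (rule ccontr)
  assume "\<not> (\<forall>k\<in>K. al k = 0)"
  then obtain k0 where "k0 \<in> K" "al k0 \<noteq> 0" by blast
  define r where "r = (\<lambda>k i. if i \<in> S then a k i else 0)"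
  define R where "R = K - {k0}"
  have "r k0 = (\<lambda>i. \<Sum>k\<in>R. (- al k / al k0) * r k i)"
  proof
    fix i
    have "(\<Sum>k\<in>K. al k * r k i) = 0" using rows by (cases "i \<in> S") (simp_all add: r_def)
    then have "al k0 * r k0 i = - (\<Sum>k\<in>R. al k * r k i)"
      using sum.remove[OF assms(2) \<open>k0 \<in> K\<close>, of "\<lambda>k. al k * r k i"] unfolding R_def by simp
    then show "r k0 i = (\<Sum>k\<in>R. (- al k / al k0) * r k i)"
      using \<open>al k0 \<noteq> 0\<close> by (simp add: field_simps sum_divide_distrib[symmetric] sum_negf)
  qed
  also have "\<dots> \<in> fspace.span (r ` R)"
    by (rule fspace_lin_comb_in_span) (auto intro: fspace.span_base)
  finally have "r k0 \<in> fspace.span (r ` R)" .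
  moreover have "r k \<in> fspace.span (r ` R)" if "k \<in> R" for k
    using that by (intro fspace.span_base) simp
  ultimately have "r ` K \<subseteq> fspace.span (r ` R)"
    unfolding R_def by auto
  then have span_rows: "fspace.span (r ` K) \<subseteq> fspace.span (r ` R)"
    using fspace.span_minimal fspace.subspace_span by blast
  have "unit_vec i \<in> fspace.span (r ` K)" if "i \<in> S" for i
  proof -
    have "\<exists>lm. \<forall>n\<in>S. unit_vec i n = (\<Sum>k\<in>K. lm k * a k n)"
    proof (rule in_span_if_annihilates_annihilator[OF assms(1,2)])
      fix x assume "\<forall>k\<in>K. dotp S (a k) x = 0"
      then have "\<forall>j\<in>S. x j = 0" using columns unfolding dotp_def by (simp add: mult.commute)
      then show "dotp S (unit_vec i) x = 0" using dotp_unit_vec[OF assms(1) that] that by simp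
    qed
    then obtain lm where "\<forall>n\<in>S. unit_vec i n = (\<Sum>k\<in>K. lm k * a k n)" by blast
    then have "unit_vec i n = (\<Sum>k\<in>K. lm k * r k n)" for n
      using that by (cases "n \<in> S") (auto simp: r_def unit_vec_def)
    then have "unit_vec i = (\<lambda>n. \<Sum>k\<in>K. lm k * r k n)" by blast
    also have "\<dots> \<in> fspace.span (r ` K)"
      by (rule fspace_lin_comb_in_span) (auto intro: fspace.span_base)
    finally show ?thesis .
  qed
  with span_rows have "unit_vec ` S \<subseteq> fspace.span (r ` R)" by blast
  moreover have "finite R" using assms(2) unfolding R_def by simp
  ultimately have "card S \<le> card (r ` R)"
    using card_le_if_lin_indep_in_span[OF assms(1) lin_indep_on_unit_vec[OF assms(1)]] by simp
  also have "\<dots> \<le> card R" by (rule card_image_le[OF \<open>finite R\<close>])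
  also have "\<dots> < card K" unfolding R_def by (rule card_Diff1_less[OF assms(2) \<open>k0 \<in> K\<close>])
  finally show False using assms(3) by simp
qed

section \<open>Affine coordinates and general position\<close>

definition affine_coord :: "('v \<Rightarrow> nat \<Rightarrow> real) \<Rightarrow> nat \<Rightarrow> 'v \<Rightarrow> real" where
  "affine_coord p k i = (if k = 0 then 1 else p i (k - 1))"

definition affine_fun :: "nat \<Rightarrow> ('v \<Rightarrow> nat \<Rightarrow> real) \<Rightarrow> (nat \<Rightarrow> real) \<Rightarrow> 'v \<Rightarrow> real" where
  "affine_fun d p al i = (\<Sum>k<Suc d. al k * affine_coord p k i)"

lemma affine_fun_eq: "affine_fun d p al i = al 0 + (\<Sum>k<d. al (Suc k) * p i k)"
  unfolding affine_fun_def affine_coord_def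
  by (simp del: sum.lessThan_Suc add: sum.lessThan_Suc_shift)

lemma affine_fun_cong: "p i = q i \<Longrightarrow> affine_fun d p al i = affine_fun d q al i"
  by (simp add: affine_fun_eq)

lemma affine_fun_diff: "affine_fun d p al i - affine_fun d p be i = affine_fun d p (\<lambda>k. al k - be k) i"
  by (simp add: affine_fun_eq algebra_simps sum_subtractf)

lemma aff_indep_iff_affine_coord:
  "aff_indep d p S \<longleftrightarrow>
     (\<forall>c. (\<forall>k<Suc d. (\<Sum>i\<in>S. c i * affine_coord p k i) = 0) \<longrightarrow> (\<forall>i\<in>S. c i = 0))"
proof -
  have "(\<forall>k<Suc d. (\<Sum>i\<in>S. c i * affine_coord p k i) = 0)
      \<longleftrightarrow> (\<Sum>i\<in>S. c i) = 0 \<and> (\<forall>k<d. (\<Sum>i\<in>S. c i * p i k) = 0)" for c :: "'a \<Rightarrow> real"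
    by (auto simp: affine_coord_def All_less_Suc2 cong: if_cong)
  then show ?thesis unfolding aff_indep_def by presburger
qed

lemma affine_fun_eq_0_imp_coeffs_eq_0:
  assumes "aff_indep d p S" "card S = Suc d" "\<forall>i\<in>S. affine_fun d p al i = 0"
  shows "\<forall>k<Suc d. al k = 0"
proof -
  have "finite S" using assms(2) card.infinite by fastforce
  then show ?thesis
    using square_matrix_rows_independent[of S "{..<Suc d}" "affine_coord p" al] assms
    unfolding aff_indep_iff_affine_coord affine_fun_def by auto
qed

lemma pencil_relation_shift:
  fixes a b :: "'k \<Rightarrow> 'a \<Rightarrow> real" and c :: "real \<Rightarrow> 'a \<Rightarrow> real"
  assumes eigen: "\<forall>t\<in>T. t \<noteq> 0 \<and> (\<forall>k\<in>K. (\<Sum>i\<in>S. c t i * (a k i + t * b k i)) = 0)"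
    and relation: "\<forall>i\<in>S. (\<Sum>t\<in>T. al t * c t i) = 0"
  shows "\<forall>k\<in>K. (\<Sum>i\<in>S. (\<Sum>t\<in>T. al t * (s - 1 / t) * c t i) * a k i) = 0"
proof
  fix k assume "k \<in> K"
  have swap: "(\<Sum>t\<in>T. f t * (\<Sum>i\<in>S. c t i * w i)) = (\<Sum>i\<in>S. (\<Sum>t\<in>T. f t * c t i) * w i)"
    for f w by (simp add: sum_distrib_left sum_distrib_right mult_ac sum.swap[of _ T S])
  have "(\<Sum>t\<in>T. al t * (\<Sum>i\<in>S. c t i * b k i)) = 0"
    using relation by (simp add: swap)
  moreover have "(\<Sum>i\<in>S. c t i * b k i) = - (1 / t) * (\<Sum>i\<in>S. c t i * a k i)" if "t \<in> T" for t
  proof -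
    have "(\<Sum>i\<in>S. c t i * a k i) + t * (\<Sum>i\<in>S. c t i * b k i) = 0"
      using eigen that \<open>k \<in> K\<close> by (simp add: algebra_simps sum.distrib sum_distrib_left)
    then show ?thesis using eigen that by (simp add: field_simps)
  qed
  ultimately have "(\<Sum>t\<in>T. al t * (1 / t) * (\<Sum>i\<in>S. c t i * a k i)) = 0"
    by (simp add: sum_negf mult.assoc)
  moreover have "(\<Sum>t\<in>T. al t * (\<Sum>i\<in>S. c t i * a k i)) = 0"
    using relation by (simp add: swap)
  ultimately have "(\<Sum>t\<in>T. al t * (s - 1 / t) * (\<Sum>i\<in>S. c t i * a k i)) = 0"
    by (simp add: algebra_simps sum_subtractf sum_distrib_left[symmetric])
  then show "(\<Sum>i\<in>S. (\<Sum>t\<in>T. al t * (s - 1 / t) * c t i) * a k i) = 0"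
    by (simp add: swap)
qed

text \<open>\<open>c t\<close> is an eigenvector of the pencil \<open>(b, a)\<close> for the eigenvalue \<open>-1/t\<close>; eigenvectors
  for distinct eigenvalues are independent.\<close>
lemma pencil_eigenvectors_lin_indep:
  fixes a b :: "'k \<Rightarrow> 'a \<Rightarrow> real" and c :: "real \<Rightarrow> 'a \<Rightarrow> real"
  assumes "finite T"
    and columns: "\<And>x. \<forall>k\<in>K. (\<Sum>i\<in>S. x i * a k i) = 0 \<Longrightarrow> \<forall>i\<in>S. x i = 0"
    and eigen: "\<forall>t\<in>T. t \<noteq> 0 \<and> (\<forall>k\<in>K. (\<Sum>i\<in>S. c t i * (a k i + t * b k i)) = 0)"
    and nonzero: "\<forall>t\<in>T. \<exists>i\<in>S. c t i \<noteq> 0"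
    and support: "\<And>t i. i \<notin> S \<Longrightarrow> c t i = 0"
  shows "lin_indep_on T c"
  using assms(1) subset_refl
proof (induction T rule: finite_subset_induct')
  case empty
  then show ?case by (simp add: lin_indep_on_def)
next
  case (insert t0 T')
  show ?case
    unfolding lin_indep_on_def
  proof (intro allI impI)
    fix al assume rel: "\<forall>j. (\<Sum>t\<in>insert t0 T'. al t * c t j) = 0"
    have eigen': "\<forall>t\<in>insert t0 T'. t \<noteq> 0 \<and> (\<forall>k\<in>K. (\<Sum>i\<in>S. c t i * (a k i + t * b k i)) = 0)"
      using eigen insert.hyps(2,3) by blast
    have "\<forall>i\<in>S. (\<Sum>t\<in>insert t0 T'. al t * c t i) = 0" using rel by blast
    with eigen' have "\<forall>k\<in>K. (\<Sum>i\<in>S. (\<Sum>t\<in>insert t0 T'. al t * (1 / t0 - 1 / t) * c t i) * a k i) = 0"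
      by (rule pencil_relation_shift)
    then have "\<forall>k\<in>K. (\<Sum>i\<in>S. (\<Sum>t\<in>T'. (al t * (1 / t0 - 1 / t)) * c t i) * a k i) = 0"
      using insert.hyps(1,4) by simp
    then have "\<forall>i\<in>S. (\<Sum>t\<in>T'. (al t * (1 / t0 - 1 / t)) * c t i) = 0"
      by (rule columns)
    then have "\<forall>j. (\<Sum>t\<in>T'. (al t * (1 / t0 - 1 / t)) * c t j) = 0"
      using support by (metis (no_types, lifting) mult_zero_right sum.neutral)
    then have "\<forall>t\<in>T'. al t * (1 / t0 - 1 / t) = 0"
      using insert.IH[unfolded lin_indep_on_def, THEN spec[of _ "\<lambda>t. al t * (1 / t0 - 1 / t)"]]
      by blast
    moreover have "1 / t0 - 1 / t \<noteq> 0" if "t \<in> T'" for t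
      using eigen' that insert.hyps(4) by (auto simp: field_simps)
    ultimately have rest: "\<forall>t\<in>T'. al t = 0" by simp
    then have "al t0 * c t0 j = 0" for j
      using rel insert.hyps(1,4) by auto
    moreover obtain i where "c t0 i \<noteq> 0" using nonzero insert.hyps(2) by blast
    ultimately have "al t0 = 0" by (metis mult_eq_0_iff)
    with rest show "\<forall>t\<in>insert t0 T'. al t = 0" by simp
  qed
qed

lemma pencil_singular_finite:
  fixes a b :: "'k \<Rightarrow> 'a \<Rightarrow> real"
  assumes "finite S"
    and columns: "\<And>x. \<forall>k\<in>K. (\<Sum>i\<in>S. x i * a k i) = 0 \<Longrightarrow> \<forall>i\<in>S. x i = 0"
  shows "finite {t. \<exists>x. (\<exists>i\<in>S. x i \<noteq> 0) \<and> (\<forall>k\<in>K. (\<Sum>i\<in>S. x i * (a k i + t * b k i)) = 0)}"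
    (is "finite ?singular")
proof (rule ccontr)
  assume "infinite ?singular"
  then obtain T where T: "T \<subseteq> ?singular" "finite T" "card T = Suc (card S)"
    using infinite_arbitrarily_large by blast
  then have "\<forall>t\<in>T. \<exists>x. (\<exists>i\<in>S. x i \<noteq> 0) \<and> (\<forall>k\<in>K. (\<Sum>i\<in>S. x i * (a k i + t * b k i)) = 0)"
    by blast
  then obtain c where c: "\<forall>t\<in>T. (\<exists>i\<in>S. c t i \<noteq> 0) \<and> (\<forall>k\<in>K. (\<Sum>i\<in>S. c t i * (a k i + t * b k i)) = 0)"
    by (rule bchoice[THEN exE])
  define c' where "c' = (\<lambda>t i. if i \<in> S then c t i else 0)"
  have sum_c': "(\<Sum>i\<in>S. c' t i * f i) = (\<Sum>i\<in>S. c t i * f i)" for t f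
    by (rule sum.cong) (simp_all add: c'_def)
  have "0 \<notin> T"
  proof
    assume "0 \<in> T"
    with c obtain i where "i \<in> S" "c 0 i \<noteq> 0" "\<forall>k\<in>K. (\<Sum>i\<in>S. c 0 i * a k i) = 0"
      by auto
    then show False using columns[of "c 0"] by blast
  qed
  then have "lin_indep_on T c'"
  proof (intro pencil_eigenvectors_lin_indep[OF T(2) columns])
    show "\<forall>t\<in>T. t \<noteq> 0 \<and> (\<forall>k\<in>K. (\<Sum>i\<in>S. c' t i * (a k i + t * b k i)) = 0)"
      using c \<open>0 \<notin> T\<close> by (auto simp: sum_c')
    show "\<forall>t\<in>T. \<exists>i\<in>S. c' t i \<noteq> 0" using c by (auto simp: c'_def)
  qed (auto simp: c'_def)
  moreover have "c' ` T \<subseteq> fspace.span (unit_vec ` S)"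
    using supported_in_span_unit_vec[OF assms(1)] unfolding c'_def by auto
  ultimately have "card T \<le> card (unit_vec ` S)"
    using card_le_if_lin_indep_in_span[OF T(2)] assms(1) by blast
  also have "\<dots> \<le> card S" by (rule card_image_le[OF assms(1)])
  finally show False using T(3) by simp
qed

lemma general_position_perturb:
  assumes "finite V" "general_position d V p"
  shows "\<exists>t. t \<noteq> 0 \<and> general_position d V (\<lambda>i l. p i l + t * v i l)"
proof -
  define b where "b = (\<lambda>k i. if k = 0 then 0 else v i (k - 1))"
  have perturbed_coord:
    "affine_coord (\<lambda>i l. p i l + t * v i l) k i = affine_coord p k i + t * b k i" for t k i
    by (simp add: affine_coord_def b_def)
  define Bad where
    "Bad = (\<Union>S\<in>{S. S \<subseteq> V \<and> card S = d + 1}. {t. \<not> aff_indep d (\<lambda>i l. p i l + t * v i l) S})"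
  have "finite {t. \<not> aff_indep d (\<lambda>i l. p i l + t * v i l) S}"
    if "S \<subseteq> V" "card S = d + 1" for S
  proof (rule finite_subset)
    show "{t. \<not> aff_indep d (\<lambda>i l. p i l + t * v i l) S} \<subseteq>
        {t. \<exists>x. (\<exists>i\<in>S. x i \<noteq> 0) \<and>
          (\<forall>k\<in>{..<Suc d}. (\<Sum>i\<in>S. x i * (affine_coord p k i + t * b k i)) = 0)}"
      unfolding aff_indep_iff_affine_coord perturbed_coord by auto
    have "finite S" using that(2) card.infinite by fastforce
    moreover have "aff_indep d p S" using assms(2) that unfolding general_position_def by blast
    ultimately show "finite {t. \<exists>x. (\<exists>i\<in>S. x i \<noteq> 0) \<and>
        (\<forall>k\<in>{..<Suc d}. (\<Sum>i\<in>S. x i * (affine_coord p k i + t * b k i)) = 0)}"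
      by (intro pencil_singular_finite) (auto simp: aff_indep_iff_affine_coord)
  qed
  moreover have "finite {S. S \<subseteq> V \<and> card S = d + 1}" using assms(1) by simp
  ultimately have "finite (insert 0 Bad)"
    unfolding Bad_def by blast
  then obtain t :: real where "t \<notin> insert 0 Bad"
    using ex_new_if_finite infinite_UNIV_char_0 by blast
  then show ?thesis unfolding Bad_def general_position_def by auto
qed

section \<open>Universal rigidity, flexes and stresses\<close>

lemma sqdist_perturb_diff:
  "sqdist d (\<lambda>i l. p i l - t * v i l) i j - sqdist d (\<lambda>i l. p i l + t * v i l) i j
     = - 4 * t * (\<Sum>l<d. (p i l - p j l) * (v i l - v j l))"
proof -
  have "sqdist d (\<lambda>i l. p i l - t * v i l) i j - sqdist d (\<lambda>i l. p i l + t * v i l) i j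
      = (\<Sum>l<d. ((p i l - p j l) - t * (v i l - v j l))^2 - ((p i l - p j l) + t * (v i l - v j l))^2)"
    unfolding sqdist_def by (simp add: sum_subtractf algebra_simps)
  also have "\<dots> = (\<Sum>l<d. - 4 * t * ((p i l - p j l) * (v i l - v j l)))"
    by (intro sum.cong) (simp_all add: power2_eq_square algebra_simps)
  finally show ?thesis by (simp add: sum_distrib_left sum_negf)
qed

text \<open>For suitable \<open>t \<noteq> 0\<close> the configuration \<open>p + t v\<close> is in general position, and \<open>p - t v\<close>
  has the same edge lengths, so universal rigidity makes all pair lengths agree.\<close>
lemma univ_rigid_graph_infinitesimal_flex:
  assumes "graph V E" "univ_rigid_graph d V E" "general_position d V p"
    and flex: "\<forall>i\<in>V. \<forall>j\<in>V. {i,j} \<in> E \<longrightarrow> (\<Sum>l<d. (p i l - p j l) * (v i l - v j l)) = 0"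
    and "a \<in> V" "b \<in> V"
  shows "(\<Sum>l<d. (p a l - p b l) * (v a l - v b l)) = 0"
proof -
  have "finite V" using assms(1) unfolding graph_def by simp
  then obtain t where "t \<noteq> 0" and gp: "general_position d V (\<lambda>i l. p i l + t * v i l)"
    using general_position_perturb assms(3) by blast
  with assms(2) have rigid: "univ_rigid_framework d V E (\<lambda>i l. p i l + t * v i l)"
    unfolding univ_rigid_graph_def by blast
  have "\<forall>i\<in>V. \<forall>j\<in>V. {i, j} \<in> E \<longrightarrow>
      sqdist d (\<lambda>i l. p i l - t * v i l) i j = sqdist d (\<lambda>i l. p i l + t * v i l) i j"
  proof (intro ballI impI)
    fix i j assume "i \<in> V" "j \<in> V" "{i, j} \<in> E"
    then show "sqdist d (\<lambda>i l. p i l - t * v i l) i j = sqdist d (\<lambda>i l. p i l + t * v i l) i j"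
      using flex sqdist_perturb_diff[of d p t v i j] by simp
  qed
  then have "sqdist d (\<lambda>i l. p i l - t * v i l) a b = sqdist d (\<lambda>i l. p i l + t * v i l) a b"
    using rigid \<open>a \<in> V\<close> \<open>b \<in> V\<close> unfolding univ_rigid_framework_def by blast
  then show ?thesis using sqdist_perturb_diff[of d p t v a b] \<open>t \<noteq> 0\<close> by simp
qed

text \<open>The row of the rigidity matrix for the ordered pair \<open>e\<close>, with columns \<open>V \<times> {..<d}\<close>.\<close>
definition rigidity_row :: "('v \<Rightarrow> nat \<Rightarrow> real) \<Rightarrow> 'v \<times> 'v \<Rightarrow> 'v \<times> nat \<Rightarrow> real" where
  "rigidity_row p e kl =
     (if fst kl = fst e then p (fst e) (snd kl) - p (snd e) (snd kl) else 0)
   + (if fst kl = snd e then p (snd e) (snd kl) - p (fst e) (snd kl) else 0)"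

lemma dotp_rigidity_row:
  assumes "finite V" "i \<in> V" "j \<in> V"
  shows "dotp (V \<times> {..<d}) (rigidity_row p (i,j)) x = (\<Sum>l<d. (p i l - p j l) * (x (i,l) - x (j,l)))"
proof -
  have "dotp (V \<times> {..<d}) (rigidity_row p (i,j)) x = (\<Sum>k\<in>V. \<Sum>l<d. rigidity_row p (i,j) (k,l) * x (k,l))"
    unfolding dotp_def by (simp add: sum.cartesian_product)
  also have "\<dots> = (\<Sum>l<d. \<Sum>k\<in>V. rigidity_row p (i,j) (k,l) * x (k,l))" by (rule sum.swap)
  also have "\<dots> = (\<Sum>l<d. (p i l - p j l) * (x (i,l) - x (j,l)))"
  proof (rule sum.cong[OF refl])
    fix l
    have "(\<Sum>k\<in>V. rigidity_row p (i,j) (k,l) * x (k,l))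
        = (\<Sum>k\<in>V. (if k = i then (p i l - p j l) * x (i,l) else 0)) + (\<Sum>k\<in>V. (if k = j then (p j l - p i l) * x (j,l) else 0))"
      unfolding sum.distrib[symmetric] by (intro sum.cong refl) (auto simp: rigidity_row_def algebra_simps)
    also have "\<dots> = (p i l - p j l) * (x (i,l) - x (j,l))" using assms by (simp add: algebra_simps)
    finally show "(\<Sum>k\<in>V. rigidity_row p (i,j) (k,l) * x (k,l)) = (p i l - p j l) * (x (i,l) - x (j,l))" .
  qed
  finally show ?thesis .
qed

lemma sum_rigidity_row:
  assumes "finite V" "i \<in> V"
  shows "(\<Sum>e\<in>V \<times> V. mu e * rigidity_row p e (i,l)) = (\<Sum>j\<in>V. (mu (i,j) + mu (j,i)) * (p i l - p j l))"
proof -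
  have "(\<Sum>e\<in>V \<times> V. mu e * rigidity_row p e (i,l)) = (\<Sum>a\<in>V. \<Sum>b\<in>V. mu (a,b) * rigidity_row p (a,b) (i,l))"
    by (simp add: sum.cartesian_product)
  also have "\<dots> = (\<Sum>a\<in>V. \<Sum>b\<in>V. (if a = i then mu (i,b) * (p i l - p b l) else 0))
        + (\<Sum>a\<in>V. \<Sum>b\<in>V. (if b = i then mu (a,i) * (p i l - p a l) else 0))"
    unfolding sum.distrib[symmetric] by (intro sum.cong refl) (auto simp: rigidity_row_def algebra_simps)
  also have "\<dots> = (\<Sum>b\<in>V. mu (i,b) * (p i l - p b l)) + (\<Sum>a\<in>V. mu (a,i) * (p i l - p a l))"
    using assms by (simp add: sum.swap[of _ V V] if_distrib cong: if_cong)
  also have "\<dots> = (\<Sum>j\<in>V. (mu (i,j) + mu (j,i)) * (p i l - p j l))"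
    by (simp add: sum.distrib[symmetric] algebra_simps)
  finally show ?thesis .
qed

lemma univ_rigid_graph_rigidity_rows_span:
  assumes "graph V E" "univ_rigid_graph d V E" "general_position d V p"
  defines "P \<equiv> {e \<in> V \<times> V. {fst e, snd e} \<in> E}"
  shows "\<exists>lm. \<forall>n\<in>V \<times> {..<d}.
           (\<Sum>e\<in>V \<times> V. c e * rigidity_row p e n) = (\<Sum>e\<in>P. lm e * rigidity_row p e n)"
proof (rule in_span_if_annihilates_annihilator)
  have "finite V" using assms(1) unfolding graph_def by simp
  then show "finite (V \<times> {..<d})" "finite P" unfolding P_def by auto
  fix x assume orth: "\<forall>e\<in>P. dotp (V \<times> {..<d}) (rigidity_row p e) x = 0"
  have "(\<Sum>l<d. (p i l - p j l) * (x (i,l) - x (j,l))) = 0" if "i \<in> V" "j \<in> V" for i j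
  proof (rule univ_rigid_graph_infinitesimal_flex[OF assms(1-3) _ that])
    show "\<forall>i\<in>V. \<forall>j\<in>V. {i, j} \<in> E \<longrightarrow> (\<Sum>l<d. (p i l - p j l) * (x (i,l) - x (j,l))) = 0"
      using orth dotp_rigidity_row[OF \<open>finite V\<close>] unfolding P_def by force
  qed
  then have "dotp (V \<times> {..<d}) (rigidity_row p e) x = 0" if "e \<in> V \<times> V" for e
    using that dotp_rigidity_row[OF \<open>finite V\<close>] by force
  then show "dotp (V \<times> {..<d}) (\<lambda>n. \<Sum>e\<in>V \<times> V. c e * rigidity_row p e n) x = 0"
    by (simp add: dotp_sum_left)
qed

definition weight_laplacian :: "'v set \<Rightarrow> ('v \<Rightarrow> 'v \<Rightarrow> real) \<Rightarrow> 'v \<Rightarrow> 'v \<Rightarrow> real" where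
  "weight_laplacian V w i j = (if i = j then (\<Sum>k\<in>V - {i}. w i k) else - w i j)"

lemma stress_matrix_weight_laplacian:
  assumes "finite V"
    and symmetric: "\<forall>i\<in>V. \<forall>j\<in>V. w i j = w j i"
    and support: "\<forall>i\<in>V. \<forall>j\<in>V. i \<noteq> j \<and> {i, j} \<notin> E \<longrightarrow> w i j = 0"
    and equilibrium: "\<forall>i\<in>V. \<forall>l<d. (\<Sum>j\<in>V. w i j * (p i l - p j l)) = 0"
  shows "stress_matrix d V E p (weight_laplacian V w)"
  unfolding stress_matrix_def
proof (intro conjI ballI allI impI)
  fix i j assume "i \<in> V" "j \<in> V"
  then show "weight_laplacian V w i j = weight_laplacian V w j i"
    using symmetric by (simp add: weight_laplacian_def)
next
  fix i j assume "i \<in> V" "j \<in> V" "i \<noteq> j \<and> {i, j} \<notin> E"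
  then show "weight_laplacian V w i j = 0"
    using support by (simp add: weight_laplacian_def)
next
  fix i assume "i \<in> V"
  have off_diagonal: "(\<Sum>j\<in>V - {i}. weight_laplacian V w i j * f j) = - (\<Sum>j\<in>V - {i}. w i j * f j)" for f
    unfolding sum_negf[symmetric] by (rule sum.cong) (auto simp: weight_laplacian_def)
  have split: "(\<Sum>j\<in>V. weight_laplacian V w i j * f j)
      = (\<Sum>k\<in>V - {i}. w i k) * f i - (\<Sum>j\<in>V - {i}. w i j * f j)" for f
    using sum.remove[OF \<open>finite V\<close> \<open>i \<in> V\<close>, of "\<lambda>j. weight_laplacian V w i j * f j"]
    by (simp add: off_diagonal weight_laplacian_def[of V w i i])
  show "(\<Sum>j\<in>V. weight_laplacian V w i j) = 0"
    using split[of "\<lambda>_. 1"] by simp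
  fix l assume "l < d"
  have "(\<Sum>j\<in>V. weight_laplacian V w i j * p j l) = (\<Sum>j\<in>V - {i}. w i j * (p i l - p j l))"
    unfolding split by (simp add: sum_distrib_left algebra_simps sum_subtractf)
  also have "\<dots> = (\<Sum>j\<in>V. w i j * (p i l - p j l))"
    using sum.remove[OF \<open>finite V\<close> \<open>i \<in> V\<close>, of "\<lambda>j. w i j * (p i l - p j l)"] by simp
  finally show "(\<Sum>j\<in>V. weight_laplacian V w i j * p j l) = 0"
    using equilibrium \<open>i \<in> V\<close> \<open>l < d\<close> by simp
qed

text \<open>Dual form of \<open>univ_rigid_graph_infinitesimal_flex\<close>.\<close>
lemma univ_rigid_graph_stress_extension:
  assumes "graph V E" "univ_rigid_graph d V E" "general_position d V p"
    and F: "\<forall>f\<in>F. f \<subseteq> V \<and> card f = 2" "F \<inter> E = {}"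
    and symmetric: "\<forall>i\<in>V. \<forall>j\<in>V. be i j = be j i"
  shows "\<exists>S. stress_matrix d V (E \<union> F) p S \<and> (\<forall>i\<in>V. \<forall>j\<in>V. {i, j} \<in> F \<longrightarrow> S i j = be i j)"
proof -
  have "finite V" using assms(1) unfolding graph_def by simp
  define P where "P = {e \<in> V \<times> V. {fst e, snd e} \<in> E}"
  define c where "c = (\<lambda>e. if {fst e, snd e} \<in> F then be (fst e) (snd e) / 2 else 0)"
  obtain lm where lm: "\<forall>n\<in>V \<times> {..<d}.
      (\<Sum>e\<in>V \<times> V. c e * rigidity_row p e n) = (\<Sum>e\<in>P. lm e * rigidity_row p e n)"
    using univ_rigid_graph_rigidity_rows_span[OF assms(1-3)] unfolding P_def by blast
  define mu where "mu = (\<lambda>e. (if e \<in> P then lm e else 0) - c e)"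
  define w where "w = (\<lambda>i j. mu (i,j) + mu (j,i))"
  have "(\<Sum>e\<in>V \<times> V. mu e * rigidity_row p e (i,l)) = 0" if "i \<in> V" "l < d" for i l
  proof -
    have "(\<Sum>e\<in>V \<times> V. (if e \<in> P then lm e else 0) * rigidity_row p e (i,l))
        = (\<Sum>e\<in>P. lm e * rigidity_row p e (i,l))"
      by (rule sum.mono_neutral_cong_right) (auto simp: P_def \<open>finite V\<close>)
    with lm that show ?thesis
      by (simp add: mu_def algebra_simps sum_subtractf)
  qed
  then have "stress_matrix d V (E \<union> F) p (weight_laplacian V w)"
    using \<open>finite V\<close> sum_rigidity_row[OF \<open>finite V\<close>]
    by (intro stress_matrix_weight_laplacian)
      (auto simp: w_def mu_def P_def c_def insert_commute)
  moreover have "weight_laplacian V w i j = be i j" if "i \<in> V" "j \<in> V" "{i, j} \<in> F" for i j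
  proof -
    have "i \<noteq> j" using F(1) that(3) by fastforce
    moreover have "{i, j} \<notin> E" using F(2) that(3) by blast
    ultimately show ?thesis
      using that symmetric
      by (simp add: weight_laplacian_def w_def mu_def P_def c_def insert_commute)
  qed
  ultimately show ?thesis by blast
qed

section \<open>Kernels of stress matrices\<close>

lemma stress_matrix_symmetric: "stress_matrix d V E p M \<Longrightarrow> symmetric_on V M"
  unfolding stress_matrix_def symmetric_on_def by blast

lemma stress_matrix_lin_comb:
  assumes "stress_matrix d V E p A" "stress_matrix d V E' p B"
  shows "stress_matrix d V (E \<union> E') p (\<lambda>i j. c * A i j + B i j)"
  using assms unfolding stress_matrix_def
  by (simp add: sum.distrib algebra_simps flip: sum_distrib_left)

lemma in_kernel_cong: "\<forall>i\<in>V. x i = y i \<Longrightarrow> in_kernel V M x \<longleftrightarrow> in_kernel V M y"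
  unfolding in_kernel_def by (simp cong: sum.cong)

lemma in_kernel_iff_matrix_kernel:
  "x \<in> matrix_kernel V M \<longleftrightarrow> in_kernel V M x \<and> (\<forall>i. i \<notin> V \<longrightarrow> x i = 0)"
  unfolding matrix_kernel_def in_kernel_def by blast

lemma in_kernel_restrict_matrix_kernel:
  "in_kernel V M x \<Longrightarrow> (\<lambda>i. if i \<in> V then x i else 0) \<in> matrix_kernel V M"
  unfolding in_kernel_iff_matrix_kernel using in_kernel_cong[of V "\<lambda>i. if i \<in> V then x i else 0" x M]
  by simp

lemma stress_matrix_in_kernel_affine_fun:
  assumes "stress_matrix d V E p M"
  shows "in_kernel V M (affine_fun d p al)"
  unfolding in_kernel_def
proof
  fix i assume "i \<in> V"
  have "sum (M i) V = 0" "\<forall>l<d. (\<Sum>j\<in>V. M i j * p j l) = 0"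
    using assms \<open>i \<in> V\<close> unfolding stress_matrix_def by blast+
  then have "(\<Sum>j\<in>V. M i j * affine_coord p k j) = 0" if "k < Suc d" for k
    using that by (cases k) (simp_all add: affine_coord_def)
  then have "(\<Sum>k<Suc d. al k * (\<Sum>j\<in>V. M i j * affine_coord p k j)) = 0" by simp
  then show "(\<Sum>j\<in>V. M i j * affine_fun d p al j) = 0"
    unfolding affine_fun_def
    by (simp del: sum.lessThan_Suc add: sum_distrib_left mult_ac sum.swap[of _ V])
qed

lemma lin_indep_on_affine_coord:
  assumes "S \<subseteq> V" "aff_indep d p S" "card S = Suc d"
  shows "lin_indep_on {..<Suc d} (\<lambda>k i. if i \<in> V then affine_coord p k i else 0)"
  unfolding lin_indep_on_def
proof (intro allI impI)
  fix al assume vanishes: "\<forall>i. (\<Sum>k<Suc d. al k * (if i \<in> V then affine_coord p k i else 0)) = 0"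
  have "affine_fun d p al i = 0" if "i \<in> S" for i
  proof -
    have "i \<in> V" using assms(1) that by blast
    with vanishes[rule_format, of i] show ?thesis
      by (simp del: sum.lessThan_Suc add: affine_fun_def)
  qed
  then show "\<forall>k\<in>{..<Suc d}. al k = 0"
    using affine_fun_eq_0_imp_coeffs_eq_0[OF assms(2,3)] by simp
qed

lemma affine_fun_indicator_coeffs:
  "k < Suc d \<Longrightarrow> affine_fun d p (\<lambda>k'. if k' = k then 1 else 0) = affine_coord p k"
  unfolding affine_fun_def by (simp del: sum.lessThan_Suc add: fun_eq_iff if_distrib[of "\<lambda>c. c * _"] cong: if_cong)

lemma has_nullity_spanning_set:
  assumes "has_nullity V M n"
  obtains B where "finite B" "\<forall>b\<in>B. in_kernel V M b"
    "\<And>x. in_kernel V M x \<Longrightarrow> \<exists>c. \<forall>i\<in>V. x i = (\<Sum>b\<in>B. c b * b i)"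
proof -
  obtain B where B: "finite B" "B \<subseteq> matrix_kernel V M"
    "\<forall>x\<in>matrix_kernel V M. \<exists>c. x = (\<lambda>i. \<Sum>b\<in>B. c b * b i)"
    using assms unfolding has_nullity_def by blast
  have "\<exists>c. \<forall>i\<in>V. x i = (\<Sum>b\<in>B. c b * b i)" if x_kernel: "in_kernel V M x" for x
  proof -
    obtain c where c: "(\<lambda>i. if i \<in> V then x i else 0) = (\<lambda>i. \<Sum>b\<in>B. c b * b i)"
      using B(3) in_kernel_restrict_matrix_kernel[OF x_kernel] by blast
    have "x i = (\<Sum>b\<in>B. c b * b i)" if "i \<in> V" for i
      using fun_cong[OF c, of i] that by simp
    then show ?thesis by blast
  qed
  moreover have "\<forall>b\<in>B. in_kernel V M b" using B(2) in_kernel_iff_matrix_kernel by blast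
  ultimately show ?thesis using that B(1) by blast
qed

lemma stress_kernel_affine:
  assumes "stress_matrix d V E p M" "has_nullity V M (Suc d)"
    and "S \<subseteq> V" "aff_indep d p S" "card S = Suc d"
    and "in_kernel V M x"
  shows "\<exists>al. \<forall>i\<in>V. x i = affine_fun d p al i"
proof -
  obtain B where B: "finite B" "card B = Suc d" "B \<subseteq> matrix_kernel V M"
    "\<forall>x\<in>matrix_kernel V M. \<exists>c. x = (\<lambda>i. \<Sum>b\<in>B. c b * b i)"
    using assms(2) unfolding has_nullity_def by blast
  define g where "g = (\<lambda>k i. if i \<in> V then affine_coord p k i else 0)"
  have "g ` {..<Suc d} \<subseteq> matrix_kernel V M"
  proof
    fix y assume "y \<in> g ` {..<Suc d}"
    then obtain k where "k < Suc d" "y = g k" by auto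
    moreover have "in_kernel V M (affine_coord p k)"
      using stress_matrix_in_kernel_affine_fun[OF assms(1)]
      unfolding affine_fun_indicator_coeffs[OF \<open>k < Suc d\<close>, symmetric] .
    ultimately show "y \<in> matrix_kernel V M"
      using in_kernel_restrict_matrix_kernel unfolding g_def by blast
  qed
  moreover have "matrix_kernel V M \<subseteq> fspace.span B"
    using B(1,4) fspace_span_finite_iff by blast
  moreover have "lin_indep_on {..<Suc d} g"
    unfolding g_def by (rule lin_indep_on_affine_coord[OF assms(3-5)])
  ultimately have "\<exists>al. \<forall>i. (\<lambda>i. if i \<in> V then x i else 0) i = (\<Sum>k\<in>{..<Suc d}. al k * g k i)"
    using lin_indep_on_spans[OF B(1) finite_lessThan _ _ _ _ in_kernel_restrict_matrix_kernel[OF assms(6)]]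
      B(2) by simp
  then obtain al where al: "\<forall>i. (if i \<in> V then x i else 0) = (\<Sum>k<Suc d. al k * g k i)" by auto
  have "x i = affine_fun d p al i" if "i \<in> V" for i
    using al[rule_format, of i] that by (simp del: sum.lessThan_Suc add: g_def affine_fun_def)
  then show ?thesis by blast
qed

lemma has_nullity_if_kernel_affine:
  assumes "stress_matrix d V E p M"
    and "S \<subseteq> V" "aff_indep d p S" "card S = Suc d"
    and kernel_affine: "\<And>x. in_kernel V M x \<Longrightarrow> \<exists>al. \<forall>i\<in>V. x i = affine_fun d p al i"
  shows "has_nullity V M (Suc d)"
proof -
  define g where "g = (\<lambda>k i. if i \<in> V then affine_coord p k i else 0)"
  have indep: "lin_indep_on {..<Suc d} g"
    unfolding g_def by (rule lin_indep_on_affine_coord[OF assms(2-4)])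
  have inj: "inj_on g {..<Suc d}" by (rule lin_indep_on_inj_on[OF finite_lessThan indep])
  have "g k \<in> matrix_kernel V M" if "k < Suc d" for k
    using in_kernel_restrict_matrix_kernel[OF stress_matrix_in_kernel_affine_fun[OF assms(1)]]
    unfolding g_def affine_fun_indicator_coeffs[OF that, symmetric] .
  then have "g ` {..<Suc d} \<subseteq> matrix_kernel V M" by blast
  moreover have "\<exists>c. x = (\<lambda>i. \<Sum>b\<in>g ` {..<Suc d}. c b * b i)"
    if x_kernel: "x \<in> matrix_kernel V M" for x
  proof -
    obtain al where al: "\<forall>i\<in>V. x i = affine_fun d p al i"
      using kernel_affine x_kernel unfolding in_kernel_iff_matrix_kernel by blast
    have "x i = (\<Sum>k<Suc d. al k * g k i)" for i
      using al x_kernel unfolding in_kernel_iff_matrix_kernel g_def affine_fun_def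
      by (cases "i \<in> V") (simp_all del: sum.lessThan_Suc)
    then have "x = (\<lambda>i. \<Sum>b\<in>g ` {..<Suc d}. (al \<circ> the_inv_into {..<Suc d} g) b * b i)"
      by (simp del: sum.lessThan_Suc add: fun_eq_iff sum.reindex[OF inj] the_inv_into_f_f[OF inj])
    then show ?thesis by blast
  qed
  ultimately show ?thesis
    unfolding has_nullity_def
    using lin_indep_on_imp_lin_indep_fun[OF finite_lessThan indep] card_image[OF inj]
    by (intro exI[of _ "g ` {..<Suc d}"]) simp
qed

lemma exists_psd_multiple_plus_stress:
  assumes "finite V" "stress_matrix d V E p A" "psd V A" "has_nullity V A (Suc d)"
    and "S0 \<subseteq> V" "aff_indep d p S0" "card S0 = Suc d"
    and "stress_matrix d V E' p S"
  shows "\<exists>c. \<forall>x. bilin V A x x \<le> bilin V (\<lambda>i j. c * A i j + S i j) x x"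
proof -
  obtain B where B: "finite B" "\<forall>b\<in>B. in_kernel V A b"
    "\<And>x. in_kernel V A x \<Longrightarrow> \<exists>c. \<forall>i\<in>V. x i = (\<Sum>b\<in>B. c b * b i)"
    using has_nullity_spanning_set[OF assms(4)] by blast
  have "in_kernel V (\<lambda>i j. - S i j) x" if x_kernel: "in_kernel V A x" for x
  proof -
    obtain al where "\<forall>i\<in>V. x i = affine_fun d p al i"
      using stress_kernel_affine[OF assms(2,4-7) x_kernel] by blast
    then have "in_kernel V S x"
      using stress_matrix_in_kernel_affine_fun[OF assms(8)] in_kernel_cong by blast
    then show ?thesis unfolding in_kernel_def by (simp add: sum_negf)
  qed
  moreover have "symmetric_on V (\<lambda>i j. - S i j)"
    using stress_matrix_symmetric[OF assms(8)] unfolding symmetric_on_def by simp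
  ultimately obtain C where C: "\<forall>x. bilin V (\<lambda>i j. - S i j) x x \<le> C * bilin V A x x"
    using bilin_dominated_by_psd[OF assms(1,3) stress_matrix_symmetric[OF assms(2)] _ B(1,2)] B(3)
    by blast
  have "bilin V A x x \<le> bilin V (\<lambda>i j. (max C 0 + 1) * A i j + S i j) x x" for x
  proof -
    have "0 \<le> bilin V A x x" using assms(3) psd_iff_bilin by blast
    moreover have "- bilin V S x x \<le> C * bilin V A x x"
      using C[rule_format, of x] by (simp add: bilin_uminus_matrix)
    moreover have "C * bilin V A x x \<le> max C 0 * bilin V A x x"
      using \<open>0 \<le> bilin V A x x\<close> by (intro mult_right_mono) simp_all
    ultimately show ?thesis
      unfolding bilin_lin_comb_matrix by (simp add: distrib_right)
  qed
  then show ?thesis by blast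
qed

lemma in_kernel_if_dominated:
  assumes "finite V" "psd V A" "symmetric_on V A"
    and dominated: "\<forall>x. bilin V A x x \<le> bilin V A' x x"
    and "in_kernel V A' x"
  shows "in_kernel V A x"
proof (rule psd_bilin_self_eq_0_imp_in_kernel[OF assms(1-3)])
  show "bilin V A x x = 0"
    using dominated[rule_format, of x] bilin_in_kernel_right[OF assms(5), of x] assms(2)
    unfolding psd_iff_bilin by (metis order_antisym)
qed

section \<open>Gluing stress matrices\<close>

definition glue_matrix ::
  "'v set \<Rightarrow> ('v \<Rightarrow> 'v \<Rightarrow> real) \<Rightarrow> 'v set \<Rightarrow> ('v \<Rightarrow> 'v \<Rightarrow> real) \<Rightarrow> 'v \<Rightarrow> 'v \<Rightarrow> real" where
  "glue_matrix VA A VB B i j =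
     (if i \<in> VA \<and> j \<in> VA then A i j else 0) + (if i \<in> VB \<and> j \<in> VB then B i j else 0)"

lemma sum_if_mem_subset: "finite V \<Longrightarrow> A \<subseteq> V \<Longrightarrow> (\<Sum>j\<in>V. if j \<in> A then f j else 0) = sum f A"
  using sum.inter_restrict[of V f A] by (simp add: Int_absorb1)

lemma glue_matrix_mult:
  assumes "finite VA" "finite VB"
  shows "(\<Sum>j\<in>VA \<union> VB. glue_matrix VA A VB B i j * x j)
           = (if i \<in> VA then (\<Sum>j\<in>VA. A i j * x j) else 0) + (if i \<in> VB then (\<Sum>j\<in>VB. B i j * x j) else 0)"
proof -
  have "(\<Sum>j\<in>VA \<union> VB. glue_matrix VA A VB B i j * x j)
      = (\<Sum>j\<in>VA \<union> VB. if j \<in> VA then (if i \<in> VA then A i j * x j else 0) else 0)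
        + (\<Sum>j\<in>VA \<union> VB. if j \<in> VB then (if i \<in> VB then B i j * x j else 0) else 0)"
    unfolding sum.distrib[symmetric] by (intro sum.cong) (auto simp: glue_matrix_def algebra_simps)
  also have "\<dots> = (\<Sum>j\<in>VA. if i \<in> VA then A i j * x j else 0) + (\<Sum>j\<in>VB. if i \<in> VB then B i j * x j else 0)"
    using assms by (simp add: sum_if_mem_subset)
  finally show ?thesis by simp
qed

lemma bilin_glue_matrix:
  assumes "finite VA" "finite VB"
  shows "bilin (VA \<union> VB) (glue_matrix VA A VB B) x x = bilin VA A x x + bilin VB B x x"
proof -
  have "bilin (VA \<union> VB) (glue_matrix VA A VB B) x x
      = (\<Sum>i\<in>VA \<union> VB. (if i \<in> VA then x i * (\<Sum>j\<in>VA. A i j * x j) else 0)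
                       + (if i \<in> VB then x i * (\<Sum>j\<in>VB. B i j * x j) else 0))"
    unfolding bilin_eq_dotp dotp_def glue_matrix_mult[OF assms] by (intro sum.cong) (auto simp: distrib_left)
  also have "\<dots> = bilin VA A x x + bilin VB B x x"
    using assms by (simp add: sum.distrib sum_if_mem_subset bilin_eq_dotp dotp_def)
  finally show ?thesis .
qed

lemma stress_matrix_glue:
  assumes "finite VA" "finite VB"
    and stA: "stress_matrix d VA EA pA A" and stB: "stress_matrix d VB EB pB B"
    and common: "\<forall>i\<in>VA \<inter> VB. pA i = pB i"
    and F: "\<forall>f\<in>F. f \<subseteq> VA \<inter> VB"
    and cancel: "\<forall>i\<in>VA \<inter> VB. \<forall>j\<in>VA \<inter> VB. {i, j} \<in> F \<longrightarrow> A i j + B i j = 0"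
  shows "stress_matrix d (VA \<union> VB) ((EA \<union> EB) - F) (\<lambda>i. if i \<in> VA then pA i else pB i)
           (glue_matrix VA A VB B)"
  unfolding stress_matrix_def
proof (intro conjI ballI allI impI)
  fix i j assume "i \<in> VA \<union> VB" "j \<in> VA \<union> VB"
  then show "glue_matrix VA A VB B i j = glue_matrix VA A VB B j i"
    using stress_matrix_symmetric[OF stA] stress_matrix_symmetric[OF stB]
    unfolding glue_matrix_def symmetric_on_def by auto
next
  fix i j assume ij: "i \<in> VA \<union> VB" "j \<in> VA \<union> VB" "i \<noteq> j \<and> {i, j} \<notin> (EA \<union> EB) - F"
  show "glue_matrix VA A VB B i j = 0"
  proof (cases "{i, j} \<in> F")
    case True
    then show ?thesis using F cancel by (auto simp: glue_matrix_def)
  next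
    case False
    with ij have "{i, j} \<notin> EA" "{i, j} \<notin> EB" by auto
    then show ?thesis
      using ij stA stB unfolding glue_matrix_def stress_matrix_def by auto
  qed
next
  fix i assume "i \<in> VA \<union> VB"
  have "i \<in> VA \<Longrightarrow> sum (A i) VA = 0" "i \<in> VB \<Longrightarrow> sum (B i) VB = 0"
    using stA stB unfolding stress_matrix_def by blast+
  then show "(\<Sum>j\<in>VA \<union> VB. glue_matrix VA A VB B i j) = 0"
    using glue_matrix_mult[OF assms(1,2), of A B i "\<lambda>_. 1"] by simp
  fix k assume "k < d"
  let ?p = "\<lambda>i. if i \<in> VA then pA i else pB i"
  have "(\<Sum>j\<in>VA. A i j * ?p j k) = (\<Sum>j\<in>VA. A i j * pA j k)"
    by (rule sum.cong) simp_all
  moreover have "(\<Sum>j\<in>VB. B i j * ?p j k) = (\<Sum>j\<in>VB. B i j * pB j k)"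
    by (rule sum.cong) (use common in auto)
  moreover have "i \<in> VA \<Longrightarrow> (\<Sum>j\<in>VA. A i j * pA j k) = 0" "i \<in> VB \<Longrightarrow> (\<Sum>j\<in>VB. B i j * pB j k) = 0"
    using stA stB \<open>k < d\<close> unfolding stress_matrix_def by blast+
  ultimately show "(\<Sum>j\<in>VA \<union> VB. glue_matrix VA A VB B i j * ?p j k) = 0"
    using glue_matrix_mult[OF assms(1,2), of A B i "\<lambda>j. ?p j k"] by simp
qed

lemma affine_fun_coeffs_cong: "\<forall>k<Suc d. al k = be k \<Longrightarrow> affine_fun d p al = affine_fun d p be"
  unfolding affine_fun_def by (simp del: sum.lessThan_Suc add: fun_eq_iff)

text \<open>The kernel of the glued matrix is that of both summands, and affine functions on \<open>VA\<close>
  and on \<open>VB\<close> agreeing on the affinely spanning set \<open>S0\<close> have the same coefficients.\<close>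
lemma glue_matrix_kernel_affine:
  assumes "finite VA" "finite VB" "psd VA A" "psd VB B" "symmetric_on VA A" "symmetric_on VB B"
    and kernel_A: "\<And>x. in_kernel VA A x \<Longrightarrow> \<exists>al. \<forall>i\<in>VA. x i = affine_fun d pA al i"
    and kernel_B: "\<And>x. in_kernel VB B x \<Longrightarrow> \<exists>al. \<forall>i\<in>VB. x i = affine_fun d pB al i"
    and "S0 \<subseteq> VA \<inter> VB" "aff_indep d pA S0" "card S0 = Suc d"
    and common: "\<forall>i\<in>VA \<inter> VB. pA i = pB i"
    and "in_kernel (VA \<union> VB) (glue_matrix VA A VB B) x"
  shows "\<exists>al. \<forall>i\<in>VA \<union> VB. x i = affine_fun d (\<lambda>i. if i \<in> VA then pA i else pB i) al i"
proof -
  have "bilin VA A x x + bilin VB B x x = 0"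
    using bilin_in_kernel_right[OF assms(13), of x] bilin_glue_matrix[OF assms(1,2)] by simp
  moreover have "0 \<le> bilin VA A x x" "0 \<le> bilin VB B x x"
    using assms(3,4) psd_iff_bilin by blast+
  ultimately have "bilin VA A x x = 0" "bilin VB B x x = 0" by linarith+
  then have "in_kernel VA A x" "in_kernel VB B x"
    using psd_bilin_self_eq_0_imp_in_kernel assms(1-6) by blast+
  then obtain al be where al: "\<forall>i\<in>VA. x i = affine_fun d pA al i"
    and be: "\<forall>i\<in>VB. x i = affine_fun d pB be i"
    using kernel_A kernel_B by blast
  have "affine_fun d pA (\<lambda>k. al k - be k) i = 0" if "i \<in> S0" for i
  proof -
    have "affine_fun d pA be i = affine_fun d pB be i"
      using common assms(9) that by (intro affine_fun_cong) blast
    moreover have "x i = affine_fun d pA al i" "x i = affine_fun d pB be i"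
      using al be assms(9) that by auto
    ultimately show ?thesis by (simp flip: affine_fun_diff)
  qed
  then have "\<forall>k<Suc d. al k - be k = 0"
    using affine_fun_eq_0_imp_coeffs_eq_0[OF assms(10,11), of "\<lambda>k. al k - be k"] by blast
  then have "\<forall>k<Suc d. al k = be k" by simp
  then have "affine_fun d pB be = affine_fun d pB al"
    by (simp add: affine_fun_coeffs_cong)
  then have "x i = affine_fun d (\<lambda>i. if i \<in> VA then pA i else pB i) al i" if "i \<in> VA \<union> VB" for i
    using al be that by (cases "i \<in> VA") (auto intro: affine_fun_cong)
  then show ?thesis by blast
qed

lemma aff_indep_cong:
  assumes "\<forall>i\<in>S. p i = q i"
  shows "aff_indep d p S \<longleftrightarrow> aff_indep d q S"
proof -
  have "(\<Sum>i\<in>S. c i * p i k) = (\<Sum>i\<in>S. c i * q i k)" for c :: "'a \<Rightarrow> real" and k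
    using assms by (intro sum.cong) auto
  then show ?thesis unfolding aff_indep_def by simp
qed

lemma has_psd_stress_nullity_glue:
  assumes "finite VA" "finite VB"
    and stA: "stress_matrix d VA EA pA A" and "psd VA A"
    and kernel_A: "\<And>x. in_kernel VA A x \<Longrightarrow> \<exists>al. \<forall>i\<in>VA. x i = affine_fun d pA al i"
    and stB: "stress_matrix d VB EB pB B" and "psd VB B"
    and kernel_B: "\<And>x. in_kernel VB B x \<Longrightarrow> \<exists>al. \<forall>i\<in>VB. x i = affine_fun d pB al i"
    and S0: "S0 \<subseteq> VA \<inter> VB" "aff_indep d pA S0" "card S0 = Suc d"
    and common: "\<forall>i\<in>VA \<inter> VB. pA i = pB i"
    and F: "\<forall>f\<in>F. f \<subseteq> VA \<inter> VB"
    and cancel: "\<forall>i\<in>VA \<inter> VB. \<forall>j\<in>VA \<inter> VB. {i, j} \<in> F \<longrightarrow> A i j + B i j = 0"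
  shows "has_psd_stress_nullity d (VA \<union> VB) ((EA \<union> EB) - F)
           (\<lambda>i. if i \<in> VA then pA i else pB i) (Suc d)"
proof -
  let ?p = "\<lambda>i. if i \<in> VA then pA i else pB i"
  have stress: "stress_matrix d (VA \<union> VB) ((EA \<union> EB) - F) ?p (glue_matrix VA A VB B)"
    by (rule stress_matrix_glue[OF assms(1,2) stA stB common F cancel])
  moreover have "psd (VA \<union> VB) (glue_matrix VA A VB B)"
    unfolding psd_iff_bilin
  proof
    fix x
    have "0 \<le> bilin VA A x x" "0 \<le> bilin VB B x x" using assms(4,7) psd_iff_bilin by blast+
    then show "0 \<le> bilin (VA \<union> VB) (glue_matrix VA A VB B) x x"
      unfolding bilin_glue_matrix[OF assms(1,2)] by simp
  qed
  moreover have "has_nullity (VA \<union> VB) (glue_matrix VA A VB B) (Suc d)"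
  proof (rule has_nullity_if_kernel_affine[OF stress])
    show "S0 \<subseteq> VA \<union> VB" "card S0 = Suc d" using S0 by auto
    have "\<forall>i\<in>S0. ?p i = pA i" using S0(1) by auto
    then show "aff_indep d ?p S0" by (rule aff_indep_cong[THEN iffD2, OF _ S0(2)])
    show "\<exists>al. \<forall>i\<in>VA \<union> VB. x i = affine_fun d ?p al i"
      if "in_kernel (VA \<union> VB) (glue_matrix VA A VB B) x" for x
      by (rule glue_matrix_kernel_affine[OF assms(1,2,4,7) stress_matrix_symmetric[OF stA]
          stress_matrix_symmetric[OF stB] kernel_A kernel_B S0 common that])
  qed
  ultimately show ?thesis unfolding has_psd_stress_nullity_def by blast
qed

lemma univ_rigid_psd_stress_prescribe:
  assumes "graph V E" "univ_rigid_graph d V E" "general_position d V p"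
    and stA: "stress_matrix d V E p A" and "psd V A" "has_nullity V A (Suc d)"
    and S0: "S0 \<subseteq> V" "card S0 = Suc d"
    and F: "\<forall>f\<in>F. f \<subseteq> V \<and> card f = 2" "F \<inter> E = {}"
    and "\<forall>i\<in>V. \<forall>j\<in>V. be i j = be j i"
  shows "\<exists>M. stress_matrix d V (E \<union> F) p M \<and> psd V M
           \<and> (\<forall>x. in_kernel V M x \<longrightarrow> (\<exists>al. \<forall>i\<in>V. x i = affine_fun d p al i))
           \<and> (\<forall>i\<in>V. \<forall>j\<in>V. {i, j} \<in> F \<longrightarrow> M i j = be i j)"
proof -
  have "finite V" using assms(1) unfolding graph_def by simp
  have "aff_indep d p S0" using assms(3) S0 unfolding general_position_def by simp
  obtain S where stS: "stress_matrix d V (E \<union> F) p S"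
    and S_F: "\<forall>i\<in>V. \<forall>j\<in>V. {i, j} \<in> F \<longrightarrow> S i j = be i j"
    using univ_rigid_graph_stress_extension[OF assms(1-3) F assms(11)] by blast
  obtain c where dominated: "\<forall>x. bilin V A x x \<le> bilin V (\<lambda>i j. c * A i j + S i j) x x"
    using exists_psd_multiple_plus_stress[OF \<open>finite V\<close> stA assms(5,6) S0(1)
        \<open>aff_indep d p S0\<close> S0(2) stS] by blast
  let ?M = "\<lambda>i j. c * A i j + S i j"
  have "stress_matrix d V (E \<union> F) p ?M"
    using stress_matrix_lin_comb[OF stA stS] by (simp add: Un_absorb1)
  moreover have "psd V ?M"
    using dominated assms(5) unfolding psd_iff_bilin by (meson order_trans)
  moreover have "\<exists>al. \<forall>i\<in>V. x i = affine_fun d p al i" if "in_kernel V ?M x" for x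
    using in_kernel_if_dominated[OF \<open>finite V\<close> assms(5) stress_matrix_symmetric[OF stA] dominated that]
      stress_kernel_affine[OF stA assms(6) S0(1) \<open>aff_indep d p S0\<close> S0(2)] by blast
  moreover have "?M i j = be i j" if "i \<in> V" "j \<in> V" "{i, j} \<in> F" for i j
  proof -
    have "i \<noteq> j" using F(1) that(3) by fastforce
    moreover have "{i, j} \<notin> E" using F(2) that(3) by blast
    ultimately have "A i j = 0" using stA that unfolding stress_matrix_def by blast
    then show ?thesis using S_F that by simp
  qed
  ultimately show ?thesis by blast
qed

theorem theorem8:
  fixes d :: nat
    and VA VB :: "'v set" and EA EB :: "'v set set"
    and pA pB :: "'v \<Rightarrow> nat \<Rightarrow> real"
  assumes "d \<ge> 1"
    and "graph VA EA" and "graph VB EB"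
    and "univ_rigid_graph d VA EA" and "univ_rigid_graph d VB EB"
    and "general_position d VA pA" and "general_position d VB pB"
    and "VA \<inter> VB \<subset> VA" and "VA \<inter> VB \<subset> VB"
    and "card (VA \<inter> VB) \<ge> d + 1"
    and "\<forall>i\<in>VA \<inter> VB. pA i = pB i"
    and "has_psd_stress_nullity d VA EA pA (d + 1)"
    and "has_psd_stress_nullity d VB EB pB (d + 1)"
  shows "has_psd_stress_nullity d (VA \<union> VB)
           ((EA \<union> EB) - {e \<in> EB - EA. e \<subseteq> VA \<inter> VB})
           (\<lambda>i. if i \<in> VA then pA i else pB i) (d + 1)"
proof -
  define F where "F = {e \<in> EB - EA. e \<subseteq> VA \<inter> VB}"
  have "finite VA" "finite VB" using assms(2,3) unfolding graph_def by simp_all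
  have "Suc d \<le> card (VA \<inter> VB)" using assms(10) by simp
  then obtain S0 where S0: "S0 \<subseteq> VA \<inter> VB" "card S0 = Suc d"
    by (meson obtain_subset_with_card_n)
  then have "S0 \<subseteq> VA" "S0 \<subseteq> VB" "card S0 = d + 1" by auto
  then have "aff_indep d pA S0" "aff_indep d pB S0"
    using assms(6,7) unfolding general_position_def by blast+
  obtain MA MB where stA: "stress_matrix d VA EA pA MA" "psd VA MA" "has_nullity VA MA (Suc d)"
    and stB: "stress_matrix d VB EB pB MB" "psd VB MB" "has_nullity VB MB (Suc d)"
    using assms(12,13) unfolding has_psd_stress_nullity_def by auto
  have kernel_B: "\<exists>al. \<forall>i\<in>VB. x i = affine_fun d pB al i" if "in_kernel VB MB x" for x
    using stress_kernel_affine[OF stB(1,3) \<open>S0 \<subseteq> VB\<close> \<open>aff_indep d pB S0\<close> S0(2) that] .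
  define be where "be = (\<lambda>i j. if i \<in> VB \<and> j \<in> VB then - MB i j else 0)"
  have F_edges: "\<forall>f\<in>F. f \<subseteq> VA \<and> card f = 2" "F \<inter> EA = {}"
    using assms(3) unfolding F_def graph_def by auto
  have be_symmetric: "\<forall>i\<in>VA. \<forall>j\<in>VA. be i j = be j i"
    using stress_matrix_symmetric[OF stB(1)] unfolding be_def symmetric_on_def by auto
  obtain MA' where stA': "stress_matrix d VA (EA \<union> F) pA MA'" "psd VA MA'"
    and kernel_A: "\<forall>x. in_kernel VA MA' x \<longrightarrow> (\<exists>al. \<forall>i\<in>VA. x i = affine_fun d pA al i)"
    and MA'_F: "\<forall>i\<in>VA. \<forall>j\<in>VA. {i, j} \<in> F \<longrightarrow> MA' i j = be i j"
    using univ_rigid_psd_stress_prescribe[OF assms(2,4,6) stA \<open>S0 \<subseteq> VA\<close> S0(2) F_edges be_symmetric]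
    by blast
  have "\<forall>i\<in>VA \<inter> VB. \<forall>j\<in>VA \<inter> VB. {i, j} \<in> F \<longrightarrow> MA' i j + MB i j = 0"
    using MA'_F unfolding be_def by simp
  moreover have "\<forall>f\<in>F. f \<subseteq> VA \<inter> VB" unfolding F_def by blast
  ultimately have "has_psd_stress_nullity d (VA \<union> VB) ((EA \<union> F \<union> EB) - F)
      (\<lambda>i. if i \<in> VA then pA i else pB i) (Suc d)"
    using has_psd_stress_nullity_glue[OF \<open>finite VA\<close> \<open>finite VB\<close> stA' kernel_A[rule_format]
        stB(1,2) kernel_B S0(1) \<open>aff_indep d pA S0\<close> S0(2) assms(11)] by blast
  moreover have "(EA \<union> F \<union> EB) - F = (EA \<union> EB) - F" unfolding F_def by blast
  ultimately show ?thesis unfolding F_def by simp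
qed

end
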